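(* Let $W_L$ be a right-angled Coxeter group with nerve $L$, and let $K\subseteq L$ be a full subcomplex. For every $t>0$ and every $q$, the von Neumann dimension of the $U_t(W_L)$-module $L^2_tH^q(W_L\Sigma_K)$ equals $b^q_t(\Sigma_K)$, the von Neumann dimension of the $U_t(W_K)$-module $L^2_tH^q(\Sigma_K)$.
   Context: A Coxeter group is right-angled if any two generators related in the standard presentation commute. Its nerve $L$ is the flag simplicial complex with vertex set $S$ in which simplices correspond to sets of pairwise commuting generators. A subcomplex $K\subseteq L$ is full if it contains every simplex of $L$ all of whose vertices lie in $K$. $W_K$ is the special subgroup generated by the vertices of $K$. The Davis chamber of $W_L$ is $D_L=CL'$ (the cone on the barycentric subdivision of $L$), and that of $W_K$ is $D_K=CK'\subseteq D_L$. Extending this inclusion $W_K$-equivariantly embeds the Davis complex $\Sigma_K$ of $W_K$ into $\Sigma_L$. Then $W_L\Sigma_K=\bigcup_{w\in W_L}w\Sigma_K$, a disjoint union of translates of $\Sigma_K$. For a Coxeter group $W$ with word length $d$: ${\bf C}_t[W]$ has basis $\{\delta_w\}$, inner product $\langle\delta_w,\delta_v\rangle_t=t^{d(w)}$ if $w=v$ and $0$ otherwise, and Hecke multiplication $\delta_w\delta_s=\delta_{ws}$ if $d(ws)>d(w)$, $t\delta_{ws}+(t-1)\delta_w$ otherwise. $L^2_t(W)$ is its completion. $U_t(W)$ and $V_t(W)$ are the von Neumann algebras generated by left, respectively right, multiplications. The trace of right multiplication by $b$ is the $\delta_1$-coefficient of $b$, summed over diagonal entries of matrices. Cochains. On a subcomplex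 $Y$ of the Davis complex $\Sigma$ of $W$ that is a union of $W$-translates of a subcomplex $E$ of the chamber $D$, the space $L^2_tC^q(Y)$ consists of $q$-cochains square-summable for the weight $t^{d(\sigma)}$, where $d(\sigma)=\min\{d(w):\sigma\subseteq wD\}$. The coboundary is $\delta$, with adjoint $\partial^tf(\eta)=\sum_{\sigma\supset\eta}[\eta:\sigma]t^{d(\sigma)-d(\eta)}f(\sigma)$. $L^2_tH^q(Y)$ is identified with the harmonic cochains $\ker\delta\cap\ker\partial^t$. Cochains embed in $\bigoplus_{\sigma\in E^{(q)}}L^2_t(W)$ via $f\mapsto W_{T(\sigma)}(t)^{-1/2}\sum_wf(w\sigma)\delta_w$, where $T(\sigma)$ is the largest $T$ with $\sigma\subseteq D_T$ and $W_T(x)=\sum_{u\in W_T}x^{d(u)}$. Dimension. The dimension of the module is the trace of the orthogonal projection onto the image of the harmonic cochains. $b^q_t(\Sigma_K)$ is this quantity for $Y=\Sigma_K$ and $W=W_K$. *)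

theory Defs
  imports "HOL-Analysis.Analysis"
begin

text \<open>Generators: a set S; commuting relation E (the edges of the nerve).  Group elements are equivalence classes
  of words.\<close>

definition rac_step :: "'a set \<Rightarrow> ('a \<Rightarrow> 'a \<Rightarrow> bool) \<Rightarrow> 'a list \<Rightarrow> 'a list \<Rightarrow> bool" where
  "rac_step S E xs ys \<longleftrightarrow>
     (\<exists>a b s. s \<in> S \<and> xs = a @ [s, s] @ b \<and> ys = a @ b) \<or>
     (\<exists>a b s u. s \<in> S \<and> u \<in> S \<and> E s u \<and> xs = a @ [s, u] @ b \<and> ys = a @ [u, s] @ b)"

definition rac_eq :: "'a set \<Rightarrow> ('a \<Rightarrow> 'a \<Rightarrow> bool) \<Rightarrow> 'a list \<Rightarrow> 'a list \<Rightarrow> bool" where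
  "rac_eq S E xs ys \<longleftrightarrow> xs \<in> lists S \<and> ys \<in> lists S \<and>
     (\<lambda>x y. rac_step S E x y \<or> rac_step S E y x)\<^sup>*\<^sup>* xs ys"

definition rac_cls :: "'a set \<Rightarrow> ('a \<Rightarrow> 'a \<Rightarrow> bool) \<Rightarrow> 'a list \<Rightarrow> 'a list set" where
  "rac_cls S E xs = {ys. rac_eq S E xs ys}"

definition rac_grp :: "'a set \<Rightarrow> ('a \<Rightarrow> 'a \<Rightarrow> bool) \<Rightarrow> 'a list set set" where
  "rac_grp S E = rac_cls S E ` lists S"

definition rac_one :: "'a set \<Rightarrow> ('a \<Rightarrow> 'a \<Rightarrow> bool) \<Rightarrow> 'a list set" where
  "rac_one S E = rac_cls S E []"

definition rac_len :: "'a set \<Rightarrow> ('a \<Rightarrow> 'a \<Rightarrow> bool) \<Rightarrow> 'a list set \<Rightarrow> nat" where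
  "rac_len S E w = (LEAST n. \<exists>xs\<in>w. length xs = n)"

definition special :: "'a set \<Rightarrow> ('a \<Rightarrow> 'a \<Rightarrow> bool) \<Rightarrow> 'a set \<Rightarrow> 'a list set set" where
  "special S E T = rac_cls S E ` lists T"

definition rac_coset :: "'a set \<Rightarrow> ('a \<Rightarrow> 'a \<Rightarrow> bool) \<Rightarrow> 'a list set \<Rightarrow> 'a set \<Rightarrow> 'a list set set" where
  "rac_coset S E w T = {rac_cls S E (xs @ ys) | xs ys. xs \<in> w \<and> ys \<in> lists T}"

definition poincare :: "'a set \<Rightarrow> ('a \<Rightarrow> 'a \<Rightarrow> bool) \<Rightarrow> 'a set \<Rightarrow> real \<Rightarrow> real" where
  "poincare S E T x = (\<Sum>u\<in>special S E T. x ^ rac_len S E u)"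

definition nerve :: "'a set \<Rightarrow> ('a \<Rightarrow> 'a \<Rightarrow> bool) \<Rightarrow> 'a set set" where
  "nerve S E = {T. T \<noteq> {} \<and> finite T \<and> T \<subseteq> S \<and> (\<forall>s\<in>T. \<forall>u\<in>T. s \<noteq> u \<longrightarrow> E s u)}"

definition subcomplex :: "'a set set \<Rightarrow> 'a set set \<Rightarrow> bool" where
  "subcomplex K L \<longleftrightarrow> K \<subseteq> L \<and> (\<forall>\<sigma>\<in>K. \<forall>\<tau>. \<tau> \<noteq> {} \<and> \<tau> \<subseteq> \<sigma> \<longrightarrow> \<tau> \<in> K)"

definition full_subcomplex :: "'a set set \<Rightarrow> 'a set set \<Rightarrow> bool" where
  "full_subcomplex K L \<longleftrightarrow> subcomplex K L \<and> (\<forall>\<sigma>\<in>L. \<sigma> \<subseteq> \<Union>K \<longrightarrow> \<sigma> \<in> K)"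

text \<open>The chamber D = C K' is the realization of the poset P of simplices of K
  together with the empty set (the cone point).  Its q-simplices are strict
  chains T0 < ... < Tq in P.  The q-simplices of W D are the chains of cosets
  w W_T0 < ... < w W_Tq, represented as lists of cosets.\<close>
definition chamber_chains :: "'a set set \<Rightarrow> nat \<Rightarrow> 'a set list set" where
  "chamber_chains P q = {Ts. length Ts = Suc q \<and> set Ts \<subseteq> P \<and> sorted_wrt (\<subset>) Ts}"

definition cells :: "'a set \<Rightarrow> ('a \<Rightarrow> 'a \<Rightarrow> bool) \<Rightarrow> 'a set set \<Rightarrow> nat \<Rightarrow> 'a list set set list set" where
  "cells S E P q = {map (rac_coset S E w) Ts | w Ts. w \<in> rac_grp S E \<and> Ts \<in> chamber_chains P q}"

text \<open>d(sigma) = min d(w) over w with sigma contained in wD, i.e. w lies in every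
  vertex (coset) of sigma.\<close>
definition cell_deg :: "'a set \<Rightarrow> ('a \<Rightarrow> 'a \<Rightarrow> bool) \<Rightarrow> 'a list set set list \<Rightarrow> nat" where
  "cell_deg S E \<sigma> = (LEAST n. \<exists>w\<in>rac_grp S E. (\<forall>C\<in>set \<sigma>. w \<in> C) \<and> rac_len S E w = n)"

definition del_nth :: "nat \<Rightarrow> 'b list \<Rightarrow> 'b list" where
  "del_nth i xs = take i xs @ drop (Suc i) xs"

definition cob :: "('b list \<Rightarrow> real) \<Rightarrow> 'b list \<Rightarrow> real" where
  "cob f \<sigma> = (\<Sum>i<length \<sigma>. (-1) ^ i * f (del_nth i \<sigma>))"

text \<open>The adjoint partial^t of the coboundary, on q-cochains.\<close>
definition bd_t :: "'a set \<Rightarrow> ('a \<Rightarrow> 'a \<Rightarrow> bool) \<Rightarrow> 'a set set \<Rightarrow> real \<Rightarrow> nat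
    \<Rightarrow> ('a list set set list \<Rightarrow> real) \<Rightarrow> 'a list set set list \<Rightarrow> real" where
  "bd_t S E P t q f \<eta> =
     (\<Sum>(\<sigma>, i) \<in> {(\<sigma>, i). \<sigma> \<in> cells S E P q \<and> i < length \<sigma> \<and> del_nth i \<sigma> = \<eta>}.
        (-1) ^ i * t powr (real (cell_deg S E \<sigma>) - real (cell_deg S E \<eta>)) * f \<sigma>)"

definition l2_cochains :: "'a set \<Rightarrow> ('a \<Rightarrow> 'a \<Rightarrow> bool) \<Rightarrow> 'a set set \<Rightarrow> real \<Rightarrow> nat
    \<Rightarrow> ('a list set set list \<Rightarrow> real) set" where
  "l2_cochains S E P t q = {f. (\<forall>\<sigma>. \<sigma> \<notin> cells S E P q \<longrightarrow> f \<sigma> = 0) \<and>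
     (\<lambda>\<sigma>. (f \<sigma>)\<^sup>2 * t ^ cell_deg S E \<sigma>) summable_on cells S E P q}"

definition harmonic :: "'a set \<Rightarrow> ('a \<Rightarrow> 'a \<Rightarrow> bool) \<Rightarrow> 'a set set \<Rightarrow> real \<Rightarrow> nat
    \<Rightarrow> ('a list set set list \<Rightarrow> real) set" where
  "harmonic S E P t q = {f \<in> l2_cochains S E P t q.
      (\<forall>\<sigma>\<in>cells S E P (Suc q). cob f \<sigma> = 0) \<and>
      (0 < q \<longrightarrow> (\<forall>\<eta>\<in>cells S E P (q - 1). bd_t S E P t q f \<eta> = 0))}"

text \<open>Elements of the direct sum over sigma in E^(q) of L^2_t(W) are functions on
  pairs (sigma, w).  T(sigma) is the minimal element hd Ts of the chain.\<close>
definition embed :: "'a set \<Rightarrow> ('a \<Rightarrow> 'a \<Rightarrow> bool) \<Rightarrow> 'a set set \<Rightarrow> real \<Rightarrow> nat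
    \<Rightarrow> ('a list set set list \<Rightarrow> real) \<Rightarrow> ('a set list \<times> 'a list set \<Rightarrow> real)" where
  "embed S E P t q f = (\<lambda>(Ts, w).
     if Ts \<in> chamber_chains P q \<and> w \<in> rac_grp S E
     then poincare S E (hd Ts) t powr (-1/2) * f (map (rac_coset S E w) Ts) else 0)"

definition hecke_ip :: "'a set \<Rightarrow> ('a \<Rightarrow> 'a \<Rightarrow> bool) \<Rightarrow> 'a set set \<Rightarrow> real \<Rightarrow> nat
    \<Rightarrow> ('a set list \<times> 'a list set \<Rightarrow> real) \<Rightarrow> ('a set list \<times> 'a list set \<Rightarrow> real) \<Rightarrow> real" where
  "hecke_ip S E P t q g h =
     (\<Sum>\<^sub>\<infinity>(Ts, w) \<in> chamber_chains P q \<times> rac_grp S E. g (Ts, w) * h (Ts, w) * t ^ rac_len S E w)"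

definition orth_proj :: "(('c \<Rightarrow> real) \<Rightarrow> ('c \<Rightarrow> real) \<Rightarrow> real) \<Rightarrow> ('c \<Rightarrow> real) set
    \<Rightarrow> ('c \<Rightarrow> real) \<Rightarrow> ('c \<Rightarrow> real)" where
  "orth_proj ip M x = (THE y. y \<in> M \<and> (\<forall>h\<in>M. ip (\<lambda>p. x p - y p) h = 0))"

definition delta_one :: "'a set \<Rightarrow> ('a \<Rightarrow> 'a \<Rightarrow> bool) \<Rightarrow> 'a set list
    \<Rightarrow> ('a set list \<times> 'a list set \<Rightarrow> real)" where
  "delta_one S E Ts0 = (\<lambda>(Ts, w). if Ts = Ts0 \<and> w = rac_one S E then 1 else 0)"

text \<open>Von Neumann dimension: trace of the orthogonal projection onto the image
  of the harmonic cochains, i.e. the sum over the diagonal entries of the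
  delta_1-coefficients.\<close>
definition l2_betti :: "'a set \<Rightarrow> ('a \<Rightarrow> 'a \<Rightarrow> bool) \<Rightarrow> 'a set set \<Rightarrow> real \<Rightarrow> nat \<Rightarrow> real" where
  "l2_betti S E P t q =
     (let ip = hecke_ip S E P t q;
          M = embed S E P t q ` harmonic S E P t q
      in \<Sum>Ts\<in>chamber_chains P q. ip (orth_proj ip M (delta_one S E Ts)) (delta_one S E Ts))"

end

theory Submission
  imports Defs
begin

text \<open>\<open>W\<^sub>L \<Sigma>\<^sub>K\<close> is the disjoint union of the translates \<open>w \<Sigma>\<^sub>K\<close>, and the translate through
  \<open>1\<close> is \<open>\<Sigma>\<^sub>K\<close> with the same cell degrees, because \<open>W\<^sub>K \<subseteq> W\<^sub>L\<close> preserves word length.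
  Extending a cochain of \<open>\<Sigma>\<^sub>K\<close> by zero and restricting a cochain of \<open>W\<^sub>L \<Sigma>\<^sub>K\<close> to \<open>\<Sigma>\<^sub>K\<close>
  both preserve square summability and the vanishing of \<open>\<delta>\<close> and \<open>\<partial>\<^sup>t\<close>, which are local.
  Hence the orthogonal projection of \<open>\<delta>\<^sub>1\<close> onto the harmonic cochains of \<open>W\<^sub>L \<Sigma>\<^sub>K\<close> is the
  extension by zero of its projection in \<open>\<Sigma>\<^sub>K\<close>, and the \<open>\<delta>\<^sub>1\<close>-coefficients defining the two
  dimensions coincide. The analytic input is that the projections exist: harmonic cochains form a
  closed subspace of a weighted \<open>L\<^sup>2\<close> space, since their embedding into \<open>\<Oplus> L\<^sup>2\<^sub>t(W)\<close> is
  bounded above and below and \<open>\<delta>\<close>, \<open>\<partial>\<^sup>t\<close> are continuous under pointwise limits.\<close>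

section \<open>Right-angled Coxeter groups as classes of words\<close>

lemma equivclp_map:
  assumes "equivclp r x y" and "\<And>x y. r x y \<Longrightarrow> equivclp r' (f x) (f y)"
  shows "equivclp r' (f x) (f y)"
  using assms(1)
proof induction
  case (step y z)
  then have "equivclp r' (f y) (f z)"
    using assms(2) by (blast intro: equivclp_sym)
  with step.IH show ?case by (rule equivclp_trans)
qed simp

lemma rac_step_cancelI: "s \<in> S \<Longrightarrow> rac_step S E (a @ [s, s] @ b) (a @ b)"
  unfolding rac_step_def by blast

lemma rac_step_swapI: "s \<in> S \<Longrightarrow> u \<in> S \<Longrightarrow> E s u \<Longrightarrow> rac_step S E (a @ [s, u] @ b) (a @ [u, s] @ b)"
  unfolding rac_step_def by blast

lemma rac_stepE [consumes 1, case_names cancel swap]: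
  assumes "rac_step S E xs ys"
  obtains (cancel) a b s where "s \<in> S" "xs = a @ [s, s] @ b" "ys = a @ b"
    | (swap) a b s u where "s \<in> S" "u \<in> S" "E s u" "xs = a @ [s, u] @ b" "ys = a @ [u, s] @ b"
  using assms unfolding rac_step_def by blast

lemma rac_step_lists: "rac_step S E xs ys \<Longrightarrow> xs \<in> lists S \<longleftrightarrow> ys \<in> lists S"
  by (induction rule: rac_stepE) auto

lemma rac_step_append:
  assumes "rac_step S E xs ys"
  shows "rac_step S E (a @ xs @ b) (a @ ys @ b)"
  using assms
proof (induction rule: rac_stepE)
  case (cancel a' b' s)
  then show ?case using rac_step_cancelI[where a = "a @ a'" and b = "b' @ b" and E = E] by simp
next
  case (swap a' b' s u)
  then show ?case using rac_step_swapI[where a = "a @ a'" and b = "b' @ b"] by simp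
qed

lemma equivclp_rac_step_lists:
  "equivclp (rac_step S E) xs ys \<Longrightarrow> xs \<in> lists S \<Longrightarrow> ys \<in> lists S"
  by (induction rule: equivclp_induct) (auto dest: rac_step_lists)

lemma rac_eq_equivclp: "rac_eq S E xs ys \<longleftrightarrow> xs \<in> lists S \<and> equivclp (rac_step S E) xs ys"
  unfolding rac_eq_def equivclp_def symclp_def[abs_def]
  using equivclp_rac_step_lists[unfolded equivclp_def symclp_def[abs_def]] by blast

lemma rac_eq_refl: "xs \<in> lists S \<Longrightarrow> rac_eq S E xs xs"
  by (simp add: rac_eq_equivclp)

lemma rac_eq_lists: "rac_eq S E xs ys \<Longrightarrow> xs \<in> lists S \<and> ys \<in> lists S"
  unfolding rac_eq_def by blast

lemma rac_eq_sym: "rac_eq S E xs ys \<Longrightarrow> rac_eq S E ys xs"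
  using rac_eq_lists[of S E xs ys] by (simp add: rac_eq_equivclp equivclp_sym)

lemma rac_eq_trans: "rac_eq S E xs ys \<Longrightarrow> rac_eq S E ys zs \<Longrightarrow> rac_eq S E xs zs"
  unfolding rac_eq_equivclp by (blast intro: equivclp_trans)

lemma rac_eq_append:
  assumes "rac_eq S E xs ys" "a \<in> lists S" "b \<in> lists S"
  shows "rac_eq S E (a @ xs @ b) (a @ ys @ b)"
  using assms equivclp_map[of "rac_step S E" xs ys "rac_step S E" "\<lambda>x. a @ x @ b"]
  by (auto simp: rac_eq_equivclp intro: rac_step_append)

lemma rac_eq_double: "s \<in> S \<Longrightarrow> rac_eq S E [s, s] []"
  using rac_step_cancelI[where a = "[]" and b = "[]" and E = E]
  by (simp add: rac_eq_equivclp r_into_equivclp)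

lemma rac_eq_append_rev: "xs \<in> lists S \<Longrightarrow> rac_eq S E (xs @ rev xs) []"
proof (induction xs)
  case Nil
  then show ?case by (simp add: rac_eq_refl)
next
  case (Cons x xs)
  then have "rac_eq S E ([x] @ (xs @ rev xs) @ [x]) ([x] @ [] @ [x])"
    by (intro rac_eq_append) auto
  moreover have "rac_eq S E [x, x] []"
    using Cons.prems by (intro rac_eq_double) simp
  ultimately show ?case using rac_eq_trans by fastforce
qed

lemma rac_eq_commute_past:
  assumes "s \<in> S" "\<forall>u\<in>set b. u = s \<or> E s u" "a \<in> lists S" "b \<in> lists S" "c \<in> lists S"
  shows "rac_eq S E (a @ [s] @ b @ c) (a @ b @ [s] @ c)"
  using assms
proof (induction b arbitrary: a)
  case Nil
  then show ?case by (simp add: rac_eq_refl)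
next
  case (Cons u b)
  have swap: "rac_eq S E (a @ [s, u] @ b @ c) (a @ [u, s] @ b @ c)"
  proof (cases "u = s")
    case True
    with Cons.prems show ?thesis by (simp add: rac_eq_refl)
  next
    case False
    with Cons.prems have "rac_step S E (a @ [s, u] @ b @ c) (a @ [u, s] @ b @ c)"
      by (intro rac_step_swapI) auto
    with Cons.prems show ?thesis by (auto simp: rac_eq_equivclp)
  qed
  have "rac_eq S E ((a @ [u]) @ [s] @ b @ c) ((a @ [u]) @ b @ [s] @ c)"
    using Cons by (intro Cons.IH) auto
  with swap show ?case using rac_eq_trans[OF swap] by simp
qed

text \<open>Move the second copy of a repeated letter next to the first one and cancel the pair.\<close>

lemma rac_eq_distinct_word:
  assumes "T \<subseteq> S" "\<And>s u. s \<in> T \<Longrightarrow> u \<in> T \<Longrightarrow> s \<noteq> u \<Longrightarrow> E s u" "ys \<in> lists T"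
  shows "\<exists>zs. distinct zs \<and> set zs \<subseteq> T \<and> rac_eq S E ys zs"
  using assms(3)
proof (induction "length ys" arbitrary: ys rule: less_induct)
  case less
  show ?case
  proof (cases "distinct ys")
    case True
    with less.prems assms(1) show ?thesis by (auto intro!: rac_eq_refl)
  next
    case False
    then obtain a x b c where ys: "ys = a @ [x] @ b @ [x] @ c"
      using not_distinct_decomp by blast
    with less.prems assms(1) have lists: "x \<in> S" "a \<in> lists S" "b \<in> lists S" "c \<in> lists S"
      by auto
    have "\<forall>u\<in>set b. u = x \<or> E x u"
      using less.prems assms(2)[of x] ys by auto
    with lists have move: "rac_eq S E ys (a @ b @ [x] @ [x] @ c)"
      unfolding ys by (intro rac_eq_commute_past) auto
    have "rac_eq S E ((a @ b) @ [x, x] @ c) ((a @ b) @ [] @ c)"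
      using lists by (intro rac_eq_append rac_eq_double) auto
    then have reduce: "rac_eq S E ys (a @ b @ c)"
      using rac_eq_trans[OF move] by simp
    obtain zs where "distinct zs" "set zs \<subseteq> T" "rac_eq S E (a @ b @ c) zs"
      using less.hyps[of "a @ b @ c"] less.prems ys by auto
    then show ?thesis using rac_eq_trans[OF reduce] by blast
  qed
qed

lemma mem_rac_cls: "ys \<in> rac_cls S E xs \<longleftrightarrow> rac_eq S E xs ys"
  unfolding rac_cls_def by simp

lemma rac_cls_self: "xs \<in> lists S \<Longrightarrow> xs \<in> rac_cls S E xs"
  by (simp add: mem_rac_cls rac_eq_refl)

lemma rac_cls_eq_iff: "xs \<in> lists S \<Longrightarrow> rac_cls S E xs = rac_cls S E ys \<longleftrightarrow> rac_eq S E xs ys"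
proof
  assume "xs \<in> lists S" "rac_cls S E xs = rac_cls S E ys"
  then have "xs \<in> rac_cls S E ys" using rac_cls_self[of xs S E] by simp
  then have "rac_eq S E ys xs" by (simp add: mem_rac_cls)
  then show "rac_eq S E xs ys" by (rule rac_eq_sym)
next
  assume eq: "rac_eq S E xs ys"
  show "rac_cls S E xs = rac_cls S E ys"
  proof (rule set_eqI)
    fix zs
    show "zs \<in> rac_cls S E xs \<longleftrightarrow> zs \<in> rac_cls S E ys"
      unfolding mem_rac_cls using rac_eq_trans[OF eq] rac_eq_trans[OF rac_eq_sym[OF eq]] by blast
  qed
qed

lemma rac_cls_eqI: "rac_eq S E xs ys \<Longrightarrow> rac_cls S E xs = rac_cls S E ys"
  using rac_cls_eq_iff[of xs S E ys] rac_eq_lists[of S E xs ys] by simp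

lemma rac_cls_in_grp: "xs \<in> lists S \<Longrightarrow> rac_cls S E xs \<in> rac_grp S E"
  unfolding rac_grp_def by (rule imageI)

lemma rac_grp_elem:
  assumes "w \<in> rac_grp S E" "xs \<in> w"
  shows "w = rac_cls S E xs" "xs \<in> lists S"
proof -
  obtain ys where "w = rac_cls S E ys"
    using assms(1) unfolding rac_grp_def by blast
  with assms(2) have "rac_eq S E ys xs"
    by (simp add: mem_rac_cls)
  with \<open>w = rac_cls S E ys\<close> show "w = rac_cls S E xs" "xs \<in> lists S"
    using rac_cls_eqI[of S E ys xs] rac_eq_lists[of S E ys xs] by simp_all
qed

lemma rac_grp_nonempty:
  assumes "w \<in> rac_grp S E"
  obtains xs where "xs \<in> w"
proof -
  obtain ys where "ys \<in> lists S" "w = rac_cls S E ys"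
    using assms unfolding rac_grp_def by blast
  then have "ys \<in> w" using rac_cls_self by simp
  then show ?thesis by (rule that)
qed

lemma rac_coset_eq:
  assumes w: "w \<in> rac_grp S E" and xs: "xs \<in> w" and T: "T \<subseteq> S"
  shows "rac_coset S E w T = {rac_cls S E (xs @ ys) | ys. ys \<in> lists T}"
proof -
  have eq: "rac_cls S E (xs' @ ys) = rac_cls S E (xs @ ys)" if "xs' \<in> w" "ys \<in> lists T" for xs' ys
  proof (rule rac_cls_eqI)
    have "xs \<in> rac_cls S E xs'"
      using xs rac_grp_elem(1)[OF w that(1)] by simp
    then have "rac_eq S E xs' xs"
      by (simp add: mem_rac_cls)
    moreover have "ys \<in> lists S"
      using that(2) T by blast
    ultimately show "rac_eq S E (xs' @ ys) (xs @ ys)"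
      using rac_eq_append[of S E xs' xs "[]" ys] by simp
  qed
  show ?thesis
  proof (intro set_eqI iffI)
    fix v
    assume "v \<in> rac_coset S E w T"
    then obtain xs' ys where "v = rac_cls S E (xs' @ ys)" "xs' \<in> w" "ys \<in> lists T"
      unfolding rac_coset_def by blast
    with eq show "v \<in> {rac_cls S E (xs @ ys) | ys. ys \<in> lists T}" by blast
  next
    fix v
    assume "v \<in> {rac_cls S E (xs @ ys) | ys. ys \<in> lists T}"
    with xs show "v \<in> rac_coset S E w T" unfolding rac_coset_def by blast
  qed
qed

lemma rac_coset_self:
  assumes "w \<in> rac_grp S E"
  shows "w \<in> rac_coset S E w T"
proof -
  obtain xs where "xs \<in> w" using assms by (rule rac_grp_nonempty)
  moreover from this have "w = rac_cls S E (xs @ [])"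
    using assms rac_grp_elem(1) by simp
  ultimately show ?thesis unfolding rac_coset_def by blast
qed

lemma rac_coset_subset:
  assumes "w \<in> rac_grp S E" "T \<subseteq> S"
  shows "rac_coset S E w T \<subseteq> rac_grp S E"
proof
  fix v
  assume v: "v \<in> rac_coset S E w T"
  obtain xs where xs: "xs \<in> w" using assms(1) by (rule rac_grp_nonempty)
  with v assms obtain ys where "v = rac_cls S E (xs @ ys)" "ys \<in> lists T"
    by (auto simp: rac_coset_eq)
  moreover have "xs @ ys \<in> lists S"
    using rac_grp_elem(2)[OF assms(1) xs] \<open>ys \<in> lists T\<close> assms(2) by auto
  ultimately show "v \<in> rac_grp S E"
    by (simp add: rac_cls_in_grp)
qed

lemma rac_len_le: "xs \<in> w \<Longrightarrow> rac_len S E w \<le> length xs"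
  unfolding rac_len_def by (rule Least_le) blast

lemma rac_len_attained:
  assumes "w \<in> rac_grp S E"
  obtains xs where "xs \<in> w" "length xs = rac_len S E w"
proof -
  obtain xs where "xs \<in> w" using assms by (rule rac_grp_nonempty)
  then have "\<exists>n. \<exists>xs\<in>w. length xs = n" by blast
  then have "\<exists>xs\<in>w. length xs = rac_len S E w"
    unfolding rac_len_def by (rule LeastI_ex)
  then show ?thesis using that by blast
qed

section \<open>Special subgroups\<close>

lemma rac_step_mono: "rac_step SK E xs ys \<Longrightarrow> SK \<subseteq> S \<Longrightarrow> rac_step S E xs ys"
  unfolding rac_step_def by blast

lemma rac_eq_mono:
  assumes "rac_eq SK E xs ys" "SK \<subseteq> S"
  shows "rac_eq S E xs ys"
proof -
  have "equivclp (rac_step SK E) xs ys"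
    using assms(1) by (simp add: rac_eq_equivclp)
  then have "equivclp (rac_step S E) (id xs) (id ys)"
    by (rule equivclp_map) (simp add: r_into_equivclp rac_step_mono[OF _ assms(2)])
  moreover have "xs \<in> lists S"
    using rac_eq_lists[OF assms(1)] assms(2) by blast
  ultimately show ?thesis
    by (simp add: rac_eq_equivclp)
qed

text \<open>Deleting the letters outside \<open>SK\<close> respects the relations, so it retracts \<open>W\<^sub>S\<close> onto
  the special subgroup \<open>W\<^sub>S\<^sub>K\<close>; this makes the inclusion \<open>W\<^sub>S\<^sub>K \<rightarrow> W\<^sub>S\<close> injective and
  length preserving.\<close>

lemma rac_step_filter:
  assumes "rac_step S E xs ys"
  shows "equivclp (rac_step SK E) (filter (\<lambda>x. x \<in> SK) xs) (filter (\<lambda>x. x \<in> SK) ys)"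
  using assms
proof (induction rule: rac_stepE)
  case (cancel a b s)
  then show ?case
    using rac_step_cancelI[where S = SK and E = E and s = s
        and a = "filter (\<lambda>x. x \<in> SK) a" and b = "filter (\<lambda>x. x \<in> SK) b"]
    by (cases "s \<in> SK") (simp_all add: r_into_equivclp)
next
  case (swap a b s u)
  then show ?case
    using rac_step_swapI[where S = SK and E = E and s = s and u = u
        and a = "filter (\<lambda>x. x \<in> SK) a" and b = "filter (\<lambda>x. x \<in> SK) b"]
    by (cases "s \<in> SK"; cases "u \<in> SK") (simp_all add: r_into_equivclp)
qed

lemma rac_eq_filter:
  assumes "rac_eq S E xs ys"
  shows "rac_eq SK E (filter (\<lambda>x. x \<in> SK) xs) (filter (\<lambda>x. x \<in> SK) ys)"
proof -
  have "equivclp (rac_step S E) xs ys"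
    using assms by (simp add: rac_eq_equivclp)
  then have "equivclp (rac_step SK E) (filter (\<lambda>x. x \<in> SK) xs) (filter (\<lambda>x. x \<in> SK) ys)"
    by (rule equivclp_map) (rule rac_step_filter)
  then show ?thesis
    by (auto simp: rac_eq_equivclp lists_eq_set)
qed

lemma filter_lists_id: "xs \<in> lists A \<Longrightarrow> filter (\<lambda>x. x \<in> A) xs = xs"
  by (induction xs) auto

definition special_incl :: "'a set \<Rightarrow> ('a \<Rightarrow> 'a \<Rightarrow> bool) \<Rightarrow> 'a list set \<Rightarrow> 'a list set" where
  "special_incl S E h = rac_cls S E (SOME xs. xs \<in> h)"

context
  fixes S SK :: "'a set" and E :: "'a \<Rightarrow> 'a \<Rightarrow> bool"
  assumes subset: "SK \<subseteq> S"
begin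

lemma rac_eq_special_iff:
  assumes "xs \<in> lists SK" "ys \<in> lists SK"
  shows "rac_eq S E xs ys \<longleftrightarrow> rac_eq SK E xs ys"
proof
  assume "rac_eq S E xs ys"
  then show "rac_eq SK E xs ys"
    using rac_eq_filter[of S E xs ys SK] assms by (simp add: filter_lists_id)
qed (rule rac_eq_mono[OF _ subset])

lemma special_incl_cls:
  assumes "xs \<in> lists SK"
  shows "special_incl S E (rac_cls SK E xs) = rac_cls S E xs"
proof -
  have "\<exists>ys. ys \<in> rac_cls SK E xs"
    using rac_cls_self[OF assms] by blast
  then have "rac_eq SK E xs (SOME ys. ys \<in> rac_cls SK E xs)"
    unfolding mem_rac_cls[symmetric] by (rule someI_ex)
  then have "rac_cls S E (SOME ys. ys \<in> rac_cls SK E xs) = rac_cls S E xs"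
    using rac_cls_eqI rac_eq_mono[OF _ subset] rac_eq_sym by metis
  then show ?thesis
    unfolding special_incl_def .
qed

lemma special_incl_mem:
  assumes "h \<in> rac_grp SK E"
  shows "special_incl S E h \<in> rac_grp S E"
proof -
  obtain xs where "xs \<in> lists SK" "h = rac_cls SK E xs"
    using assms unfolding rac_grp_def by blast
  with subset show ?thesis
    by (auto simp: special_incl_cls intro: rac_cls_in_grp)
qed

lemma inj_on_special_incl: "inj_on (special_incl S E) (rac_grp SK E)"
proof (rule inj_onI)
  fix h1 h2
  assume "h1 \<in> rac_grp SK E" "h2 \<in> rac_grp SK E" and eq: "special_incl S E h1 = special_incl S E h2"
  then obtain xs ys where xs: "xs \<in> lists SK" "h1 = rac_cls SK E xs"
    and ys: "ys \<in> lists SK" "h2 = rac_cls SK E ys"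
    unfolding rac_grp_def by blast
  have "rac_cls S E xs = rac_cls S E ys"
    using eq xs ys by (simp add: special_incl_cls)
  then have "rac_eq S E xs ys"
    using xs(1) subset by (subst (asm) rac_cls_eq_iff) auto
  then have "rac_eq SK E xs ys"
    using rac_eq_special_iff[OF xs(1) ys(1)] by simp
  then show "h1 = h2"
    using xs(2) ys(2) by (simp add: rac_cls_eqI)
qed

lemma rac_len_special_incl:
  assumes h: "h \<in> rac_grp SK E"
  shows "rac_len S E (special_incl S E h) = rac_len SK E h"
proof (rule antisym)
  obtain xs where xs: "xs \<in> lists SK" "h = rac_cls SK E xs"
    using h unfolding rac_grp_def by blast
  then have incl: "special_incl S E h = rac_cls S E xs"
    by (simp add: special_incl_cls)
  obtain ys where ys: "ys \<in> h" "length ys = rac_len SK E h"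
    using h by (rule rac_len_attained)
  then have "rac_eq S E xs ys"
    using xs rac_eq_mono[OF _ subset] by (simp add: mem_rac_cls)
  then have "ys \<in> special_incl S E h"
    by (simp add: incl mem_rac_cls)
  then show "rac_len S E (special_incl S E h) \<le> rac_len SK E h"
    using ys(2) rac_len_le by metis
  obtain zs where zs: "zs \<in> special_incl S E h" "length zs = rac_len S E (special_incl S E h)"
    using special_incl_mem[OF h] by (rule rac_len_attained)
  then have "rac_eq SK E xs (filter (\<lambda>x. x \<in> SK) zs)"
    using rac_eq_filter[of S E xs zs SK] xs(1) by (simp add: incl mem_rac_cls filter_lists_id)
  then have "filter (\<lambda>x. x \<in> SK) zs \<in> h"
    by (simp add: xs(2) mem_rac_cls)
  then have "rac_len SK E h \<le> length (filter (\<lambda>x. x \<in> SK) zs)"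
    by (rule rac_len_le)
  also have "\<dots> \<le> rac_len S E (special_incl S E h)"
    using zs(2) length_filter_le by metis
  finally show "rac_len SK E h \<le> rac_len S E (special_incl S E h)" .
qed

lemma special_incl_one: "special_incl S E (rac_one SK E) = rac_one S E"
  unfolding rac_one_def by (simp add: special_incl_cls)

lemma rac_coset_special_incl:
  assumes h: "h \<in> rac_grp SK E" and T: "T \<subseteq> SK"
  shows "rac_coset S E (special_incl S E h) T = special_incl S E ` rac_coset SK E h T"
proof -
  obtain xs where xs: "xs \<in> lists SK" "h = rac_cls SK E xs"
    using h unfolding rac_grp_def by blast
  have "xs \<in> h" "xs \<in> special_incl S E h"
    using xs subset by (auto simp: special_incl_cls intro: rac_cls_self)
  then have coset_S: "rac_coset S E (special_incl S E h) T = (\<lambda>ys. rac_cls S E (xs @ ys)) ` lists T"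
    and coset_SK: "rac_coset SK E h T = (\<lambda>ys. rac_cls SK E (xs @ ys)) ` lists T"
    using rac_coset_eq[OF special_incl_mem[OF h], of xs T] rac_coset_eq[OF h, of xs T] T subset
    unfolding Setcompr_eq_image by auto
  have "special_incl S E ` rac_coset SK E h T
      = (\<lambda>ys. special_incl S E (rac_cls SK E (xs @ ys))) ` lists T"
    by (simp add: coset_SK image_image)
  also have "\<dots> = (\<lambda>ys. rac_cls S E (xs @ ys)) ` lists T"
    using xs(1) T by (intro image_cong refl special_incl_cls) auto
  finally show ?thesis
    by (simp add: coset_S)
qed

lemma poincare_special_incl:
  assumes T: "T \<subseteq> SK"
  shows "poincare S E T x = poincare SK E T x"
proof -
  have "special_incl S E ` special SK E T = (\<lambda>ys. special_incl S E (rac_cls SK E ys)) ` lists T"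
    unfolding special_def by (simp add: image_image)
  also have "\<dots> = special S E T"
    unfolding special_def using T by (intro image_cong refl special_incl_cls) auto
  finally have special_eq: "special S E T = special_incl S E ` special SK E T" ..
  have "special SK E T \<subseteq> rac_grp SK E"
    using T unfolding special_def rac_grp_def by auto
  then have "inj_on (special_incl S E) (special SK E T)"
    by (rule inj_on_subset[OF inj_on_special_incl])
  then have "poincare S E T x = (\<Sum>u\<in>special SK E T. x ^ rac_len S E (special_incl S E u))"
    unfolding poincare_def special_eq by (rule sum.reindex_cong) simp_all
  also have "\<dots> = poincare SK E T x"
    unfolding poincare_def
    using \<open>special SK E T \<subseteq> rac_grp SK E\<close> rac_len_special_incl by (intro sum.cong) auto
  finally show ?thesis .
qed

end

section \<open>Weighted square-summable functions and orthogonal projection\<close>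

definition weighted_l2 :: "'c set \<Rightarrow> ('c \<Rightarrow> real) \<Rightarrow> ('c \<Rightarrow> real) \<Rightarrow> bool" where
  "weighted_l2 I w z \<longleftrightarrow> (\<lambda>p. z p * z p * w p) summable_on I"

definition weighted_inner :: "'c set \<Rightarrow> ('c \<Rightarrow> real) \<Rightarrow> ('c \<Rightarrow> real) \<Rightarrow> ('c \<Rightarrow> real) \<Rightarrow> real" where
  "weighted_inner I w a b = (\<Sum>\<^sub>\<infinity>p\<in>I. a p * b p * w p)"

abbreviation weighted_sqnorm :: "'c set \<Rightarrow> ('c \<Rightarrow> real) \<Rightarrow> ('c \<Rightarrow> real) \<Rightarrow> real" where
  "weighted_sqnorm I w z \<equiv> weighted_inner I w z z"

lemma weighted_inner_commute: "weighted_inner I w a b = weighted_inner I w b a"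
  unfolding weighted_inner_def by (simp add: mult.commute mult.left_commute)

lemma weighted_sqnorm_scale: "weighted_sqnorm I w (\<lambda>p. c * a p) = c * c * weighted_sqnorm I w a"
proof -
  have "(\<lambda>p. (c * a p) * (c * a p) * w p) = (\<lambda>p. (c * c) * (a p * a p * w p))"
    by (simp add: fun_eq_iff algebra_simps)
  then show ?thesis
    unfolding weighted_inner_def by (simp add: infsum_cmult_right')
qed

lemma linear_le_quadratic_imp_zero:
  fixes c A :: real
  assumes "\<And>l. 2 * l * c \<le> l * l * A" "0 \<le> A"
  shows "c = 0"
proof -
  define k where "k = 1 / (A + 1)"
  have k: "0 < k" "k * A \<le> 1"
    using assms(2) by (simp_all add: k_def field_simps)
  have "2 * (c * c * k) \<le> (c * c * k) * (k * A)"
    using assms(1)[of "c * k"] by (simp add: algebra_simps)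
  also have "\<dots> \<le> c * c * k"
    using mult_left_mono[OF k(2), of "c * c * k"] k(1) by simp
  finally have "c * c * k \<le> 0" by simp
  then show ?thesis
    using k(1) by (simp add: mult_le_0_iff) linarith
qed

context
  fixes I :: "'c set" and w :: "'c \<Rightarrow> real"
  assumes weight_nonneg: "\<And>p. p \<in> I \<Longrightarrow> 0 \<le> w p"
begin

lemma weighted_l2_lincomb:
  assumes "weighted_l2 I w a" "weighted_l2 I w b"
  shows "weighted_l2 I w (\<lambda>p. \<alpha> * a p + \<beta> * b p)"
proof -
  have bound: "(\<alpha> * a p + \<beta> * b p) * (\<alpha> * a p + \<beta> * b p) * w p
      \<le> (2 * \<alpha> * \<alpha>) * (a p * a p * w p) + (2 * \<beta> * \<beta>) * (b p * b p * w p)" if "p \<in> I" for p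
  proof -
    have "(\<alpha> * a p + \<beta> * b p) * (\<alpha> * a p + \<beta> * b p)
        \<le> (\<alpha> * a p + \<beta> * b p) * (\<alpha> * a p + \<beta> * b p) + (\<alpha> * a p - \<beta> * b p) * (\<alpha> * a p - \<beta> * b p)"
      by simp
    also have "\<dots> = 2 * \<alpha> * \<alpha> * (a p * a p) + 2 * \<beta> * \<beta> * (b p * b p)"
      by (simp add: algebra_simps)
    finally have "(\<alpha> * a p + \<beta> * b p) * (\<alpha> * a p + \<beta> * b p)
        \<le> 2 * \<alpha> * \<alpha> * (a p * a p) + 2 * \<beta> * \<beta> * (b p * b p)" .
    from mult_right_mono[OF this weight_nonneg[OF that]] show ?thesis
      by (simp add: algebra_simps)
  qed
  have "(\<lambda>p. (2 * \<alpha> * \<alpha>) * (a p * a p * w p) + (2 * \<beta> * \<beta>) * (b p * b p * w p)) summable_on I"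
    using assms unfolding weighted_l2_def by (intro summable_on_add summable_on_cmult_right)
  then show ?thesis
    unfolding weighted_l2_def
    by (rule summable_on_comparison_test) (use bound weight_nonneg in auto)
qed

lemma weighted_l2_diff: "weighted_l2 I w a \<Longrightarrow> weighted_l2 I w b \<Longrightarrow> weighted_l2 I w (\<lambda>p. a p - b p)"
  using weighted_l2_lincomb[of a b 1 "-1"] by simp

lemma weighted_l2_add: "weighted_l2 I w a \<Longrightarrow> weighted_l2 I w b \<Longrightarrow> weighted_l2 I w (\<lambda>p. a p + b p)"
  using weighted_l2_lincomb[of a b 1 1] by simp

text \<open>Polarization: \<open>4 a b = (a + b)\<^sup>2 - (a - b)\<^sup>2\<close>.\<close>

lemma weighted_product_summable:
  assumes "weighted_l2 I w a" "weighted_l2 I w b"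
  shows "(\<lambda>p. a p * b p * w p) summable_on I"
proof -
  have "(\<lambda>p. (1/4) * ((a p + b p) * (a p + b p) * w p + (-1) * ((a p - b p) * (a p - b p) * w p)))
      summable_on I"
    using weighted_l2_add[OF assms] weighted_l2_diff[OF assms] unfolding weighted_l2_def
    by (intro summable_on_cmult_right summable_on_add)
  moreover have "(\<lambda>p. (1/4) * ((a p + b p) * (a p + b p) * w p
      + (-1) * ((a p - b p) * (a p - b p) * w p))) = (\<lambda>p. a p * b p * w p)"
    by (simp add: fun_eq_iff algebra_simps)
  ultimately show ?thesis by simp
qed

lemma weighted_inner_lincomb_left:
  assumes a: "weighted_l2 I w a" and b: "weighted_l2 I w b" and c: "weighted_l2 I w c"
  shows "weighted_inner I w (\<lambda>p. \<alpha> * a p + \<beta> * b p) c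
    = \<alpha> * weighted_inner I w a c + \<beta> * weighted_inner I w b c"
proof -
  have "(\<lambda>p. (\<alpha> * a p + \<beta> * b p) * c p * w p) = (\<lambda>p. \<alpha> * (a p * c p * w p) + \<beta> * (b p * c p * w p))"
    by (simp add: fun_eq_iff algebra_simps)
  moreover have "(\<lambda>p. \<alpha> * (a p * c p * w p)) summable_on I"
    "(\<lambda>p. \<beta> * (b p * c p * w p)) summable_on I"
    using weighted_product_summable[OF a c] weighted_product_summable[OF b c]
    by (auto intro: summable_on_cmult_right)
  ultimately show ?thesis
    unfolding weighted_inner_def by (simp add: infsum_add infsum_cmult_right')
qed

lemma weighted_inner_diff_left:
  assumes "weighted_l2 I w a" "weighted_l2 I w b" "weighted_l2 I w c"
  shows "weighted_inner I w (\<lambda>p. a p - b p) c = weighted_inner I w a c - weighted_inner I w b c"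
  using weighted_inner_lincomb_left[OF assms, of 1 "-1"] by simp

lemma weighted_sqnorm_nonneg: "0 \<le> weighted_sqnorm I w z"
  unfolding weighted_inner_def by (rule infsum_nonneg) (simp add: weight_nonneg)

lemma weighted_sqnorm_ge_sum:
  assumes "weighted_l2 I w z" "finite F" "F \<subseteq> I"
  shows "(\<Sum>p\<in>F. z p * z p * w p) \<le> weighted_sqnorm I w z"
  unfolding weighted_inner_def
  using assms by (intro finite_sum_le_infsum) (auto simp: weighted_l2_def weight_nonneg)

lemma weighted_sqnorm_ge_term:
  assumes "weighted_l2 I w z" "p \<in> I"
  shows "z p * z p * w p \<le> weighted_sqnorm I w z"
  using weighted_sqnorm_ge_sum[of z "{p}"] assms by simp

lemma weighted_l2_sum_boundI:
  assumes "\<And>F. finite F \<Longrightarrow> F \<subseteq> I \<Longrightarrow> (\<Sum>p\<in>F. z p * z p * w p) \<le> B"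
  shows "weighted_l2 I w z" "weighted_sqnorm I w z \<le> B"
proof -
  show l2: "weighted_l2 I w z"
    unfolding weighted_l2_def using assms
    by (intro nonneg_bdd_above_summable_on bdd_aboveI2[where M = B]) (auto simp: weight_nonneg)
  show "weighted_sqnorm I w z \<le> B"
    unfolding weighted_inner_def using l2 assms
    by (intro infsum_le_finite_sums) (auto simp: weighted_l2_def)
qed

lemma weighted_sqnorm_add_scaled:
  assumes a: "weighted_l2 I w a" and h: "weighted_l2 I w h"
  shows "weighted_sqnorm I w (\<lambda>p. a p + l * h p)
       = weighted_sqnorm I w a + 2 * l * weighted_inner I w a h + l * l * weighted_sqnorm I w h"
proof -
  have "(\<lambda>p. (a p + l * h p) * (a p + l * h p) * w p)
      = (\<lambda>p. a p * a p * w p + ((2 * l) * (a p * h p * w p) + (l * l) * (h p * h p * w p)))"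
    by (simp add: fun_eq_iff algebra_simps)
  moreover have "(\<lambda>p. a p * a p * w p) summable_on I" "(\<lambda>p. h p * h p * w p) summable_on I"
    using a h unfolding weighted_l2_def by blast+
  moreover have "(\<lambda>p. a p * h p * w p) summable_on I"
    using a h by (rule weighted_product_summable)
  ultimately show ?thesis
    unfolding weighted_inner_def
    by (simp add: infsum_add infsum_cmult_right' summable_on_add summable_on_cmult_right)
qed

lemma weighted_parallelogram:
  assumes "weighted_l2 I w a" "weighted_l2 I w b"
  shows "weighted_sqnorm I w (\<lambda>p. a p - b p) + weighted_sqnorm I w (\<lambda>p. a p + b p)
     = 2 * weighted_sqnorm I w a + 2 * weighted_sqnorm I w b"
  using weighted_sqnorm_add_scaled[OF assms, of "-1"] weighted_sqnorm_add_scaled[OF assms, of 1]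
  by (simp add: weighted_inner_commute)


lemma weighted_sqnorm_pointwise_limit:
  assumes l2: "\<And>n. weighted_l2 I w (f n)" and lim: "\<And>p. (\<lambda>n. f n p) \<longlonglongrightarrow> g p"
    and bound: "\<And>n. weighted_sqnorm I w (f n) \<le> b n" and b: "b \<longlonglongrightarrow> \<beta>"
  shows "weighted_l2 I w g" "weighted_sqnorm I w g \<le> \<beta>"
proof -
  have sums: "(\<Sum>p\<in>F. g p * g p * w p) \<le> \<beta>" if "finite F" "F \<subseteq> I" for F
  proof (rule LIMSEQ_le[OF _ b])
    show "(\<lambda>n. \<Sum>p\<in>F. f n p * f n p * w p) \<longlonglongrightarrow> (\<Sum>p\<in>F. g p * g p * w p)"
      by (intro tendsto_intros lim)
    have "(\<Sum>p\<in>F. f n p * f n p * w p) \<le> b n" for n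
      using weighted_sqnorm_ge_sum[OF l2 that] bound by (rule order_trans)
    then show "\<exists>N. \<forall>n\<ge>N. (\<Sum>p\<in>F. f n p * f n p * w p) \<le> b n"
      by blast
  qed
  show "weighted_l2 I w g" "weighted_sqnorm I w g \<le> \<beta>"
    using weighted_l2_sum_boundI[OF sums] by simp_all
qed

lemma weighted_Cauchy_pointwise:
  assumes l2: "\<And>m n. weighted_l2 I w (\<lambda>q. f m q - f n q)" and p: "p \<in> I" "0 < w p"
    and Cauchy: "\<And>e. 0 < e \<Longrightarrow> \<exists>K. \<forall>m\<ge>K. \<forall>n\<ge>K. weighted_sqnorm I w (\<lambda>q. f m q - f n q) < e"
  shows "Cauchy (\<lambda>n. f n p)"
proof (rule metric_CauchyI)
  fix e :: real
  assume "0 < e"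
  then obtain K where K: "\<forall>m\<ge>K. \<forall>n\<ge>K. weighted_sqnorm I w (\<lambda>q. f m q - f n q) < e * e * w p"
    using Cauchy[of "e * e * w p"] p(2) by auto
  have "dist (f m p) (f n p) < e" if "K \<le> m" "K \<le> n" for m n
  proof -
    have "(f m p - f n p) * (f m p - f n p) * w p \<le> weighted_sqnorm I w (\<lambda>q. f m q - f n q)"
      by (rule weighted_sqnorm_ge_term[OF l2 p(1)])
    also have "\<dots> < e * e * w p"
      using K that by blast
    finally have "\<bar>f m p - f n p\<bar>\<^sup>2 < e\<^sup>2"
      using p(2) by (simp add: power2_eq_square)
    from power2_less_imp_less[OF this] have "\<bar>f m p - f n p\<bar> < e"
      using \<open>0 < e\<close> by simp
    then show ?thesis
      by (simp add: dist_real_def)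
  qed
  then show "\<exists>K. \<forall>m\<ge>K. \<forall>n\<ge>K. dist (f m p) (f n p) < e" by blast
qed

end

locale weighted_l2_subspace =
  fixes I :: "'c set" and w :: "'c \<Rightarrow> real" and M :: "('c \<Rightarrow> real) set"
  assumes weight_pos: "\<And>p. p \<in> I \<Longrightarrow> 0 < w p"
    and subspace_l2: "\<And>y. y \<in> M \<Longrightarrow> weighted_l2 I w y"
    and subspace_vanishes: "\<And>y p. y \<in> M \<Longrightarrow> p \<notin> I \<Longrightarrow> y p = 0"
    and subspace_zero: "(\<lambda>p. 0) \<in> M"
    and subspace_lincomb: "\<And>a b \<alpha> \<beta>. a \<in> M \<Longrightarrow> b \<in> M \<Longrightarrow> (\<lambda>p. \<alpha> * a p + \<beta> * b p) \<in> M"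
begin

lemma weight_nonneg: "p \<in> I \<Longrightarrow> 0 \<le> w p"
  using weight_pos less_imp_le by blast

lemma projection_unique:
  assumes x: "weighted_l2 I w x"
    and y1: "y1 \<in> M" "\<forall>h\<in>M. weighted_inner I w (\<lambda>p. x p - y1 p) h = 0"
    and y2: "y2 \<in> M" "\<forall>h\<in>M. weighted_inner I w (\<lambda>p. x p - y2 p) h = 0"
  shows "y1 = y2"
proof
  fix p
  define d where "d = (\<lambda>p. y1 p - y2 p)"
  have dM: "d \<in> M"
    using subspace_lincomb[OF y1(1) y2(1), of 1 "-1"] by (simp add: d_def)
  have l2: "weighted_l2 I w (\<lambda>p. x p - y1 p)" "weighted_l2 I w (\<lambda>p. x p - y2 p)" "weighted_l2 I w d"
    using weighted_l2_diff[OF weight_nonneg x subspace_l2[OF y1(1)]]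
      weighted_l2_diff[OF weight_nonneg x subspace_l2[OF y2(1)]] subspace_l2[OF dM]
    by simp_all
  have "weighted_sqnorm I w d
      = weighted_inner I w (\<lambda>p. x p - y2 p) d - weighted_inner I w (\<lambda>p. x p - y1 p) d"
    using weighted_inner_diff_left[OF weight_nonneg l2(2,1,3)] by (simp add: d_def)
  then have sqnorm: "weighted_sqnorm I w d = 0"
    using y1(2) y2(2) dM by simp
  show "y1 p = y2 p"
  proof (cases "p \<in> I")
    case True
    then have "d p * d p * w p \<le> 0"
      using weighted_sqnorm_ge_term[OF weight_nonneg l2(3)] sqnorm by fastforce
    then have "d p * d p \<le> 0"
      using weight_pos[OF True] by (simp add: mult_le_0_iff)
    then have "d p = 0"
      by (metis antisym mult_eq_0_iff zero_le_square)
    then show ?thesis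
      by (simp add: d_def)
  next
    case False
    then show ?thesis
      using subspace_vanishes[OF y1(1) False] subspace_vanishes[OF y2(1) False] by simp
  qed
qed

lemma orth_proj_eqI:
  assumes "weighted_l2 I w x"
    and "y \<in> M" "\<forall>h\<in>M. weighted_inner I w (\<lambda>p. x p - y p) h = 0"
  shows "orth_proj (weighted_inner I w) M x = y"
  unfolding orth_proj_def
proof (rule the_equality)
  fix y'
  assume "y' \<in> M \<and> (\<forall>h\<in>M. weighted_inner I w (\<lambda>p. x p - y' p) h = 0)"
  then show "y' = y"
    using projection_unique[OF assms(1) _ _ assms(2,3)] by simp
qed (use assms in simp)

definition subspace_sqdist :: "('c \<Rightarrow> real) \<Rightarrow> real" where
  "subspace_sqdist x = Inf ((\<lambda>y. weighted_sqnorm I w (\<lambda>p. x p - y p)) ` M)"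

lemma subspace_sqdist_le: "y \<in> M \<Longrightarrow> subspace_sqdist x \<le> weighted_sqnorm I w (\<lambda>p. x p - y p)"
proof -
  have "bdd_below ((\<lambda>y. weighted_sqnorm I w (\<lambda>p. x p - y p)) ` M)"
    by (rule bdd_belowI2[where m = 0]) (rule weighted_sqnorm_nonneg[OF weight_nonneg])
  then show "y \<in> M \<Longrightarrow> subspace_sqdist x \<le> weighted_sqnorm I w (\<lambda>p. x p - y p)"
    unfolding subspace_sqdist_def by (intro cInf_lower imageI)
qed

lemma minimizing_sequence_exists:
  obtains Y where "\<And>n. Y n \<in> M"
    "\<And>n. weighted_sqnorm I w (\<lambda>p. x p - Y n p) < subspace_sqdist x + inverse (real (Suc n))"
proof -
  let ?dists = "(\<lambda>y. weighted_sqnorm I w (\<lambda>p. x p - y p)) ` M"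
  have "\<forall>n. \<exists>y. y \<in> M \<and>
    weighted_sqnorm I w (\<lambda>p. x p - y p) < subspace_sqdist x + inverse (real (Suc n))"
  proof
    fix n
    have "Inf ?dists < subspace_sqdist x + inverse (real (Suc n))"
      unfolding subspace_sqdist_def by simp
    moreover have "?dists \<noteq> {}"
      using subspace_zero by blast
    ultimately have "\<exists>v\<in>?dists. v < subspace_sqdist x + inverse (real (Suc n))"
      by (intro cInf_lessD)
    then show "\<exists>y. y \<in> M \<and>
        weighted_sqnorm I w (\<lambda>p. x p - y p) < subspace_sqdist x + inverse (real (Suc n))"
      by blast
  qed
  from choice[OF this] obtain Y where
    Y: "\<forall>n. Y n \<in> M \<and>
      weighted_sqnorm I w (\<lambda>p. x p - Y n p) < subspace_sqdist x + inverse (real (Suc n))"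
    by blast
  show ?thesis
  proof (rule that)
    show "Y n \<in> M" for n
      using Y by blast
    show "weighted_sqnorm I w (\<lambda>p. x p - Y n p) < subspace_sqdist x + inverse (real (Suc n))" for n
      using Y by blast
  qed
qed

text \<open>The parallelogram law applied to \<open>x - Y n\<close> and \<open>x - Y m\<close>, whose midpoint
  \<open>x - (Y n + Y m) / 2\<close> is no closer to \<open>x\<close> than the infimum.\<close>

lemma minimizing_sequence_close:
  assumes x: "weighted_l2 I w x" and Y: "\<And>n. Y n \<in> M"
    and min: "\<And>n. weighted_sqnorm I w (\<lambda>p. x p - Y n p) < subspace_sqdist x + inverse (real (Suc n))"
  shows "weighted_sqnorm I w (\<lambda>p. Y n p - Y m p)
    \<le> 2 * inverse (real (Suc n)) + 2 * inverse (real (Suc m))"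
proof -
  define a where "a = (\<lambda>p. x p - Y m p)"
  define b where "b = (\<lambda>p. x p - Y n p)"
  have l2: "weighted_l2 I w a" "weighted_l2 I w b"
    unfolding a_def b_def using weighted_l2_diff[OF weight_nonneg x subspace_l2[OF Y]] by auto
  have "(\<lambda>p. (1/2) * Y n p + (1/2) * Y m p) \<in> M"
    by (rule subspace_lincomb[OF Y Y])
  then have "subspace_sqdist x \<le> weighted_sqnorm I w (\<lambda>p. x p - ((1/2) * Y n p + (1/2) * Y m p))"
    by (rule subspace_sqdist_le)
  also have "\<dots> = weighted_sqnorm I w (\<lambda>p. a p + b p) / 4"
    using weighted_sqnorm_scale[of I w 2 "\<lambda>p. x p - ((1/2) * Y n p + (1/2) * Y m p)"]
    by (simp add: a_def b_def algebra_simps)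
  finally have "4 * subspace_sqdist x \<le> weighted_sqnorm I w (\<lambda>p. a p + b p)"
    by simp
  moreover have "(\<lambda>p. a p - b p) = (\<lambda>p. Y n p - Y m p)"
    by (simp add: a_def b_def fun_eq_iff)
  ultimately show ?thesis
    using weighted_parallelogram[OF weight_nonneg l2] min[of m] min[of n]
    unfolding a_def b_def by simp
qed

lemma minimizing_sequence_convergent:
  assumes x: "weighted_l2 I w x" and Y: "\<And>n. Y n \<in> M"
    and min: "\<And>n. weighted_sqnorm I w (\<lambda>p. x p - Y n p) < subspace_sqdist x + inverse (real (Suc n))"
  shows "convergent (\<lambda>n. Y n p)"
proof (cases "p \<in> I")
  case True
  have Cauchy: "\<exists>K. \<forall>m\<ge>K. \<forall>n\<ge>K. weighted_sqnorm I w (\<lambda>q. Y m q - Y n q) < e" if "0 < e" for e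
  proof -
    obtain K :: nat where "4 / e < real K"
      using reals_Archimedean2 by blast
    then have K: "4 * inverse (real (Suc K)) < e"
      using \<open>0 < e\<close> by (simp add: field_simps)
    have "weighted_sqnorm I w (\<lambda>q. Y m q - Y n q) < e" if "K \<le> m" "K \<le> n" for m n
    proof -
      have "inverse (real (Suc m)) \<le> inverse (real (Suc K))"
        "inverse (real (Suc n)) \<le> inverse (real (Suc K))"
        using that by (simp_all add: field_simps)
      then show ?thesis
        using minimizing_sequence_close[OF x Y min, of m n] K by linarith
    qed
    then show ?thesis by blast
  qed
  have "weighted_l2 I w (\<lambda>p. Y m p - Y n p)" for m n
    using weighted_l2_diff[OF weight_nonneg subspace_l2[OF Y] subspace_l2[OF Y]] .
  then show ?thesis
    using weighted_Cauchy_pointwise[OF weight_nonneg _ True weight_pos[OF True] Cauchy]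
    by (simp add: Cauchy_convergent_iff)
next
  case False
  then show ?thesis
    using subspace_vanishes[OF Y] by (simp add: convergent_const)
qed

lemma minimizing_sequence_limit:
  assumes x: "weighted_l2 I w x" and Y: "\<And>n. Y n \<in> M"
    and min: "\<And>n. weighted_sqnorm I w (\<lambda>p. x p - Y n p) < subspace_sqdist x + inverse (real (Suc n))"
    and lim: "\<And>p. (\<lambda>n. Y n p) \<longlonglongrightarrow> z p"
  shows "weighted_l2 I w (\<lambda>p. x p - z p)" "weighted_sqnorm I w (\<lambda>p. x p - z p) \<le> subspace_sqdist x"
proof -
  have l2: "weighted_l2 I w (\<lambda>p. x p - Y n p)" for n
    by (rule weighted_l2_diff[OF weight_nonneg x subspace_l2[OF Y]])
  have residual_lim: "(\<lambda>n. x p - Y n p) \<longlonglongrightarrow> x p - z p" for p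
    by (intro tendsto_diff tendsto_const lim)
  have bound: "weighted_sqnorm I w (\<lambda>p. x p - Y n p) \<le> subspace_sqdist x + inverse (real (Suc n))"
    for n
    using min[of n] by simp
  have bound_lim: "(\<lambda>n. subspace_sqdist x + inverse (real (Suc n))) \<longlonglongrightarrow> subspace_sqdist x + 0"
    by (intro tendsto_add tendsto_const LIMSEQ_inverse_real_of_nat)
  from weighted_sqnorm_pointwise_limit[OF weight_nonneg l2 residual_lim bound bound_lim]
  show "weighted_l2 I w (\<lambda>p. x p - z p)" "weighted_sqnorm I w (\<lambda>p. x p - z p) \<le> subspace_sqdist x"
    by simp_all
qed

text \<open>Otherwise moving \<open>z\<close> along some \<open>h \<in> M\<close> would decrease the distance to first order.\<close>

lemma minimizer_orthogonal:
  assumes x: "weighted_l2 I w x" and z: "z \<in> M"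
    and min: "weighted_sqnorm I w (\<lambda>p. x p - z p) \<le> subspace_sqdist x" and h: "h \<in> M"
  shows "weighted_inner I w (\<lambda>p. x p - z p) h = 0"
proof (rule linear_le_quadratic_imp_zero)
  have l2: "weighted_l2 I w (\<lambda>p. x p - z p)" "weighted_l2 I w h"
    using weighted_l2_diff[OF weight_nonneg x subspace_l2[OF z]] subspace_l2[OF h] by auto
  fix l :: real
  have "(\<lambda>p. 1 * z p + l * h p) \<in> M"
    using z h by (rule subspace_lincomb)
  then have "subspace_sqdist x \<le> weighted_sqnorm I w (\<lambda>p. x p - (1 * z p + l * h p))"
    by (rule subspace_sqdist_le)
  also have "\<dots> = weighted_sqnorm I w (\<lambda>p. (x p - z p) + (- l) * h p)"
    by (simp add: algebra_simps)
  also have "\<dots> = weighted_sqnorm I w (\<lambda>p. x p - z p)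
      + 2 * (- l) * weighted_inner I w (\<lambda>p. x p - z p) h + (- l) * (- l) * weighted_sqnorm I w h"
    by (rule weighted_sqnorm_add_scaled[OF weight_nonneg l2])
  finally show "2 * l * weighted_inner I w (\<lambda>p. x p - z p) h \<le> l * l * weighted_sqnorm I w h"
    using min by simp
qed (rule weighted_sqnorm_nonneg[OF weight_nonneg])

end

locale weighted_l2_closed_subspace = weighted_l2_subspace +
  assumes subspace_closed: "\<And>Y z. (\<And>n. Y n \<in> M) \<Longrightarrow> (\<And>p. (\<lambda>n. Y n p) \<longlonglongrightarrow> z p)
      \<Longrightarrow> weighted_l2 I w z \<Longrightarrow> (\<And>p. p \<notin> I \<Longrightarrow> z p = 0) \<Longrightarrow> z \<in> M"
begin

lemma projection_exists:
  assumes x: "weighted_l2 I w x"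
  obtains y where "y \<in> M" "\<forall>h\<in>M. weighted_inner I w (\<lambda>p. x p - y p) h = 0"
proof -
  obtain Y where Y: "\<And>n. Y n \<in> M"
    and min: "\<And>n. weighted_sqnorm I w (\<lambda>p. x p - Y n p) < subspace_sqdist x + inverse (real (Suc n))"
    using minimizing_sequence_exists[of x] by blast
  have "\<forall>p. \<exists>L. (\<lambda>n. Y n p) \<longlonglongrightarrow> L"
    using minimizing_sequence_convergent[OF x Y min] unfolding convergent_def by blast
  from choice[OF this] obtain z where z: "\<And>p. (\<lambda>n. Y n p) \<longlonglongrightarrow> z p"
    by blast
  note residual = minimizing_sequence_limit[OF x Y min z]
  have "z \<in> M"
  proof (rule subspace_closed[OF Y z])
    show "weighted_l2 I w z"
      using weighted_l2_diff[OF weight_nonneg x residual(1)] by simp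
    show "z p = 0" if "p \<notin> I" for p
      using subspace_vanishes[OF Y that] LIMSEQ_unique[OF z[of p]] by simp
  qed
  moreover have "\<forall>h\<in>M. weighted_inner I w (\<lambda>p. x p - z p) h = 0"
    using minimizer_orthogonal[OF x \<open>z \<in> M\<close>] residual(2) by simp
  ultimately show ?thesis
    by (rule that)
qed

end

section \<open>Cochains on the Davis complex\<close>

lemma sum_comp_le_card_fibres:
  fixes h :: "'y \<Rightarrow> real"
  assumes "finite F" and card: "\<And>\<sigma>. \<sigma> \<in> \<phi> ` F \<Longrightarrow> card {p\<in>F. \<phi> p = \<sigma>} \<le> K"
    and nonneg: "\<And>\<sigma>. \<sigma> \<in> \<phi> ` F \<Longrightarrow> 0 \<le> h \<sigma>"
  shows "(\<Sum>p\<in>F. h (\<phi> p)) \<le> real K * (\<Sum>\<sigma>\<in>\<phi> ` F. h \<sigma>)"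
proof -
  have "(\<Sum>p\<in>F. h (\<phi> p)) = (\<Sum>\<sigma>\<in>\<phi> ` F. \<Sum>p\<in>{p\<in>F. \<phi> p = \<sigma>}. h (\<phi> p))"
    by (rule sum.image_gen[OF \<open>finite F\<close>])
  also have "\<dots> = (\<Sum>\<sigma>\<in>\<phi> ` F. real (card {p\<in>F. \<phi> p = \<sigma>}) * h \<sigma>)"
    by (intro sum.cong refl) simp
  also have "\<dots> \<le> (\<Sum>\<sigma>\<in>\<phi> ` F. real K * h \<sigma>)"
    using card nonneg by (intro sum_mono mult_right_mono) simp_all
  finally show ?thesis
    by (simp add: sum_distrib_left)
qed

lemma summable_on_bounded_fibres:
  fixes g :: "'x \<Rightarrow> real" and h :: "'y \<Rightarrow> real"
  assumes g_nonneg: "\<And>p. p \<in> A \<Longrightarrow> 0 \<le> g p" and g_le: "\<And>p. p \<in> A \<Longrightarrow> g p \<le> C * h (\<phi> p)"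
    and maps: "\<And>p. p \<in> A \<Longrightarrow> \<phi> p \<in> B"
    and fibres: "\<And>\<sigma>. \<sigma> \<in> B \<Longrightarrow> finite {p\<in>A. \<phi> p = \<sigma>} \<and> card {p\<in>A. \<phi> p = \<sigma>} \<le> K"
    and h: "h summable_on B" and h_nonneg: "\<And>\<sigma>. \<sigma> \<in> B \<Longrightarrow> 0 \<le> h \<sigma>" and "0 \<le> C"
  shows "g summable_on A"
proof (rule nonneg_bdd_above_summable_on)
  show "bdd_above (sum g ` {F. F \<subseteq> A \<and> finite F})"
  proof (rule bdd_aboveI2)
    fix F
    assume "F \<in> {F. F \<subseteq> A \<and> finite F}"
    then have F: "F \<subseteq> A" "finite F" by auto
    have card: "card {p\<in>F. \<phi> p = \<sigma>} \<le> K" if "\<sigma> \<in> \<phi> ` F" for \<sigma>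
    proof -
      have "\<sigma> \<in> B" using that F(1) maps by blast
      then have "card {p\<in>F. \<phi> p = \<sigma>} \<le> card {p\<in>A. \<phi> p = \<sigma>}"
        using fibres F(1) by (intro card_mono) auto
      then show ?thesis
        using fibres[OF \<open>\<sigma> \<in> B\<close>] by linarith
    qed
    have "sum g F \<le> C * (\<Sum>p\<in>F. h (\<phi> p))"
      using F(1) g_le by (simp add: sum_distrib_left sum_mono subset_iff)
    also have "\<dots> \<le> C * (real K * (\<Sum>\<sigma>\<in>\<phi> ` F. h \<sigma>))"
      using sum_comp_le_card_fibres[OF F(2) card] h_nonneg maps F(1) \<open>0 \<le> C\<close>
      by (intro mult_left_mono) auto
    also have "\<dots> \<le> C * (real K * (\<Sum>\<^sub>\<infinity>\<sigma>\<in>B. h \<sigma>))"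
      using h h_nonneg maps F \<open>0 \<le> C\<close>
      by (intro mult_left_mono finite_sum_le_infsum) auto
    finally show "sum g F \<le> C * (real K * (\<Sum>\<^sub>\<infinity>\<sigma>\<in>B. h \<sigma>))" .
  qed
qed (rule g_nonneg)

lemma power_le_one_plus_power_mult:
  fixes t :: real
  assumes "0 < t" "m \<le> n" "n \<le> m + k"
  shows "t ^ n \<le> (1 + t ^ k) * t ^ m"
proof -
  have "t ^ n \<le> t ^ m \<or> t ^ n \<le> t ^ (k + m)"
    using assms by (cases "t \<le> 1") (auto intro: power_decreasing power_increasing)
  moreover have "0 \<le> t ^ k * t ^ m" "0 \<le> t ^ m"
    using assms(1) by simp_all
  ultimately show ?thesis
    unfolding distrib_right power_add by linarith
qed

lemma power_le_one_plus_inverse_power_mult: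
  fixes t :: real
  assumes "0 < t" "m \<le> n" "n \<le> m + k"
  shows "t ^ m \<le> (1 + inverse (t ^ k)) * t ^ n"
proof -
  have "(1 / t) ^ n \<le> (1 + (1 / t) ^ k) * (1 / t) ^ m"
    using assms by (intro power_le_one_plus_power_mult) simp_all
  then show ?thesis
    using assms(1) by (simp add: power_one_over field_simps)
qed

type_synonym 'a cell = "'a list set set list"

locale racg_chamber =
  fixes S :: "'a set" and E :: "'a \<Rightarrow> 'a \<Rightarrow> bool" and P :: "'a set set" and t :: real
  assumes finite_gens: "finite S"
    and chamber_subset: "\<And>T. T \<in> P \<Longrightarrow> T \<subseteq> S"
    and chamber_clique: "\<And>T s u. T \<in> P \<Longrightarrow> s \<in> T \<Longrightarrow> u \<in> T \<Longrightarrow> s \<noteq> u \<Longrightarrow> E s u"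
    and t_pos: "0 < t"
begin

abbreviation "cell_index q \<equiv> chamber_chains P q \<times> rac_grp S E"
abbreviation "hecke_weight \<equiv> \<lambda>p. t ^ rac_len S E (snd p)"
abbreviation "cell_at \<equiv> \<lambda>p. map (rac_coset S E (snd p)) (fst p)"
abbreviation "short_words \<equiv> {zs. set zs \<subseteq> S \<and> distinct zs}"

definition chain_coeff :: "'a set list \<Rightarrow> real" where
  "chain_coeff Ts = poincare S E (hd Ts) t powr (-1/2)"

lemma finite_short_words: "finite short_words"
  using finite_subset_distinct[OF finite_gens] .

lemma finite_chains: "finite (chamber_chains P q)"
proof -
  have "P \<subseteq> Pow S"
    using chamber_subset by blast
  then have "finite P"
    using finite_gens by (simp add: finite_subset)
  moreover have "chamber_chains P q \<subseteq> {Ts. set Ts \<subseteq> P \<and> length Ts = Suc q}"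
    unfolding chamber_chains_def by auto
  ultimately show ?thesis
    using finite_lists_length_eq finite_subset by blast
qed

lemma chain_nonempty: "Ts \<in> chamber_chains P q \<Longrightarrow> Ts \<noteq> [] \<and> set Ts \<subseteq> P"
  unfolding chamber_chains_def by auto

lemma hd_chain_mem: "Ts \<in> chamber_chains P q \<Longrightarrow> hd Ts \<in> P"
  using chain_nonempty[of Ts q] by (cases Ts) auto

lemma mem_cells_iff: "\<sigma> \<in> cells S E P q \<longleftrightarrow> (\<exists>p\<in>cell_index q. cell_at p = \<sigma>)"
  unfolding cells_def by auto

lemma hecke_ip_eq_weighted_inner:
  "hecke_ip S E P t q g h = weighted_inner (cell_index q) hecke_weight g h"
  unfolding hecke_ip_def weighted_inner_def by (simp add: case_prod_beta')

lemma embed_eq: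
  "embed S E P t q f p = (if p \<in> cell_index q then chain_coeff (fst p) * f (cell_at p) else 0)"
  unfolding embed_def chain_coeff_def by (cases p) auto

text \<open>Cliques are spherical: \<open>W\<^sub>T\<close> is finite for \<open>T \<in> P\<close>. This is what makes the embedding
  of cochains into \<open>\<Oplus> L\<^sup>2\<^sub>t(W)\<close> bounded in both directions.\<close>

lemma coset_elem_short_word:
  assumes w: "w \<in> rac_grp S E" and xs: "xs \<in> w" and T: "T \<in> P" and v: "v \<in> rac_coset S E w T"
  obtains zs where "zs \<in> short_words" "set zs \<subseteq> T" "v = rac_cls S E (xs @ zs)"
proof -
  obtain ys where ys: "ys \<in> lists T" "v = rac_cls S E (xs @ ys)"
    using v rac_coset_eq[OF w xs chamber_subset[OF T]] by blast
  obtain zs where zs: "distinct zs" "set zs \<subseteq> T" "rac_eq S E ys zs"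
    using rac_eq_distinct_word[where E = E, OF chamber_subset[OF T] chamber_clique[OF T] ys(1)]
    by blast
  have "rac_eq S E (xs @ ys) (xs @ zs)"
    using rac_eq_append[OF zs(3), of xs "[]"] rac_grp_elem(2)[OF w xs] by simp
  then have "v = rac_cls S E (xs @ zs)"
    using ys(2) rac_cls_eqI by simp
  moreover have "zs \<in> short_words"
    using zs(1,2) chamber_subset[OF T] by auto
  ultimately show ?thesis
    using zs(2) that by blast
qed

lemma finite_special: "T \<in> P \<Longrightarrow> finite (special S E T)"
proof -
  assume T: "T \<in> P"
  have one: "rac_one S E \<in> rac_grp S E" "[] \<in> rac_one S E"
    unfolding rac_one_def by (auto intro: rac_cls_in_grp rac_cls_self)
  have "special S E T = rac_coset S E (rac_one S E) T"
    using rac_coset_eq[OF one chamber_subset[OF T]] unfolding special_def by auto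
  also have "\<dots> \<subseteq> (\<lambda>zs. rac_cls S E ([] @ zs)) ` short_words"
    using coset_elem_short_word[OF one T] by blast
  finally show ?thesis
    using finite_short_words finite_subset by blast
qed

lemma chain_coeff_pos: "Ts \<in> chamber_chains P q \<Longrightarrow> 0 < chain_coeff Ts"
proof -
  assume "Ts \<in> chamber_chains P q"
  then have T: "hd Ts \<in> P" by (rule hd_chain_mem)
  have "rac_cls S E [] \<in> special S E (hd Ts)"
    unfolding special_def by blast
  then have "0 < poincare S E (hd Ts) t"
    unfolding poincare_def using finite_special[OF T] t_pos
    by (intro sum_pos2[of _ "rac_cls S E []"]) auto
  then show ?thesis
    unfolding chain_coeff_def by simp
qed

lemma rac_len_le_coset_elem:
  assumes w: "w \<in> rac_grp S E" and T: "T \<in> P" and v: "v \<in> rac_coset S E w T"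
  shows "rac_len S E w \<le> rac_len S E v + card S"
proof -
  obtain xs where xs: "xs \<in> w"
    using w by (rule rac_grp_nonempty)
  obtain zs where zs: "zs \<in> short_words" "set zs \<subseteq> T" "v = rac_cls S E (xs @ zs)"
    by (rule coset_elem_short_word[OF w xs T v])
  have v_grp: "v \<in> rac_grp S E"
    using rac_coset_subset[OF w chamber_subset[OF T]] v by blast
  obtain ys where ys: "ys \<in> v" "length ys = rac_len S E v"
    using v_grp by (rule rac_len_attained)
  have lists: "xs \<in> lists S" "zs \<in> lists S" "rev zs \<in> lists S"
    using rac_grp_elem(2)[OF w xs] zs(1) by auto
  have "rac_eq S E (xs @ zs) ys"
    using ys(1) zs(3) by (simp add: mem_rac_cls)
  from rac_eq_append[OF this lists.Nil lists(3)]
  have extend: "rac_eq S E (xs @ zs @ rev zs) (ys @ rev zs)"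
    by simp
  have "rac_eq S E (xs @ (zs @ rev zs) @ []) (xs @ [] @ [])"
    using rac_eq_append[OF rac_eq_append_rev[OF lists(2)] lists(1) lists.Nil] .
  then have cancel: "rac_eq S E (xs @ zs @ rev zs) xs"
    by simp
  have "rac_eq S E xs (ys @ rev zs)"
    using rac_eq_trans[OF rac_eq_sym[OF cancel] extend] .
  then have "ys @ rev zs \<in> w"
    using rac_grp_elem(1)[OF w xs] by (simp add: mem_rac_cls)
  then have "rac_len S E w \<le> length (ys @ rev zs)"
    by (rule rac_len_le)
  moreover have "length zs \<le> card S"
    using zs(1) distinct_card[of zs] card_mono[OF finite_gens, of "set zs"] by simp
  ultimately show ?thesis
    using ys(2) by simp
qed

context
  fixes w Ts
  assumes w: "w \<in> rac_grp S E" and Ts: "Ts \<noteq> []" "set Ts \<subseteq> P"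
begin

lemma cell_deg_le_rac_len: "cell_deg S E (map (rac_coset S E w) Ts) \<le> rac_len S E w"
  unfolding cell_deg_def using w rac_coset_self[OF w] by (intro Least_le) auto

lemma cell_deg_attained:
  obtains v where "v \<in> rac_coset S E w (hd Ts)"
    "rac_len S E v = cell_deg S E (map (rac_coset S E w) Ts)"
proof -
  let ?Q = "\<lambda>n. \<exists>v\<in>rac_grp S E. (\<forall>C\<in>set (map (rac_coset S E w) Ts). v \<in> C) \<and> rac_len S E v = n"
  have "?Q (rac_len S E w)"
    using w rac_coset_self[OF w] by auto
  then have "?Q (cell_deg S E (map (rac_coset S E w) Ts))"
    unfolding cell_deg_def by (rule LeastI)
  moreover have "rac_coset S E w (hd Ts) \<in> set (map (rac_coset S E w) Ts)"
    using Ts by (cases Ts) auto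
  ultimately show ?thesis
    using that by blast
qed

lemma rac_len_le_cell_deg: "rac_len S E w \<le> cell_deg S E (map (rac_coset S E w) Ts) + card S"
proof -
  obtain v where "v \<in> rac_coset S E w (hd Ts)"
    "rac_len S E v = cell_deg S E (map (rac_coset S E w) Ts)"
    by (rule cell_deg_attained)
  moreover have "hd Ts \<in> P"
    using Ts by (cases Ts) auto
  ultimately show ?thesis
    using rac_len_le_coset_elem[OF w] by fastforce
qed

end

lemma cell_deg_bounds:
  assumes "p \<in> cell_index q"
  shows "cell_deg S E (cell_at p) \<le> rac_len S E (snd p)"
    "rac_len S E (snd p) \<le> cell_deg S E (cell_at p) + card S"
  using cell_deg_le_rac_len rac_len_le_cell_deg assms chain_nonempty[of "fst p" q]
  by (auto simp: mem_Times_iff)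

text \<open>A cell determines the first coset \<open>w W\<^sub>T\<^sub>0\<close> of its chain, hence \<open>w\<close> up to finitely
  many choices.\<close>

lemma cell_fibre_bound:
  assumes \<sigma>: "\<sigma> \<in> cells S E P q"
  shows "finite {p \<in> cell_index q. cell_at p = \<sigma>}
    \<and> card {p \<in> cell_index q. cell_at p = \<sigma>} \<le> card (chamber_chains P q) * card short_words"
proof -
  obtain Ts0 w0 where p0: "Ts0 \<in> chamber_chains P q" "w0 \<in> rac_grp S E" "cell_at (Ts0, w0) = \<sigma>"
    using \<sigma> mem_cells_iff by auto
  obtain xs where xs: "xs \<in> w0"
    using p0(2) by (rule rac_grp_nonempty)
  let ?W = "(\<lambda>zs. rac_cls S E (xs @ zs)) ` short_words"
  have sub: "{p \<in> cell_index q. cell_at p = \<sigma>} \<subseteq> chamber_chains P q \<times> ?W"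
  proof
    fix p
    assume "p \<in> {p \<in> cell_index q. cell_at p = \<sigma>}"
    then obtain Ts w where p: "p = (Ts, w)" "Ts \<in> chamber_chains P q" "w \<in> rac_grp S E"
      "cell_at (Ts, w) = \<sigma>"
      by auto
    have "rac_coset S E w (hd Ts) = rac_coset S E w0 (hd Ts0)"
      using p(4) p0(3) chain_nonempty[OF p(2)] chain_nonempty[OF p0(1)]
      by (cases Ts; cases Ts0) auto
    then have "w \<in> rac_coset S E w0 (hd Ts0)"
      using rac_coset_self[OF p(3)] by metis
    then obtain zs where "zs \<in> short_words" "w = rac_cls S E (xs @ zs)"
      using coset_elem_short_word[OF p0(2) xs hd_chain_mem[OF p0(1)]] by metis
    then show "p \<in> chamber_chains P q \<times> ?W"
      using p by auto
  qed
  have fin: "finite (chamber_chains P q \<times> ?W)"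
    using finite_chains finite_short_words by simp
  have "card {p \<in> cell_index q. cell_at p = \<sigma>} \<le> card (chamber_chains P q \<times> ?W)"
    by (rule card_mono[OF fin sub])
  also have "\<dots> \<le> card (chamber_chains P q) * card short_words"
    unfolding card_cartesian_product
    using card_image_le[OF finite_short_words, of "\<lambda>zs. rac_cls S E (xs @ zs)"] by simp
  finally show ?thesis
    using finite_subset[OF sub fin] by simp
qed

lemma l2_cochains_iff:
  "f \<in> l2_cochains S E P t q \<longleftrightarrow>
    (\<forall>\<sigma>. \<sigma> \<notin> cells S E P q \<longrightarrow> f \<sigma> = 0) \<and> weighted_l2 (cells S E P q) (\<lambda>\<sigma>. t ^ cell_deg S E \<sigma>) f"
  unfolding l2_cochains_def weighted_l2_def by (simp add: power2_eq_square)

lemma embed_term_le: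
  assumes p: "p \<in> cell_index q"
  shows "embed S E P t q f p * embed S E P t q f p * hecke_weight p
    \<le> (\<Sum>Ts\<in>chamber_chains P q. chain_coeff Ts * chain_coeff Ts) * (1 + t ^ card S)
        * (f (cell_at p) * f (cell_at p) * t ^ cell_deg S E (cell_at p))"
proof -
  let ?C = "\<Sum>Ts\<in>chamber_chains P q. chain_coeff Ts * chain_coeff Ts"
  have "chain_coeff (fst p) * chain_coeff (fst p) \<le> ?C"
    using p finite_chains by (intro member_le_sum) (auto simp: mem_Times_iff)
  moreover have "hecke_weight p \<le> (1 + t ^ card S) * t ^ cell_deg S E (cell_at p)"
    using power_le_one_plus_power_mult[OF t_pos cell_deg_bounds[OF p]] .
  moreover have "0 \<le> ?C"
    by (intro sum_nonneg) simp
  ultimately have "(chain_coeff (fst p) * chain_coeff (fst p))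
        * (f (cell_at p) * f (cell_at p) * hecke_weight p)
      \<le> ?C * (f (cell_at p) * f (cell_at p) * ((1 + t ^ card S) * t ^ cell_deg S E (cell_at p)))"
    using t_pos by (intro mult_mono mult_left_mono) simp_all
  then show ?thesis
    using p by (simp add: embed_eq algebra_simps)
qed

lemma embed_weighted_l2:
  assumes f: "f \<in> l2_cochains S E P t q"
  shows "weighted_l2 (cell_index q) hecke_weight (embed S E P t q f)"
  unfolding weighted_l2_def
proof (rule summable_on_bounded_fibres[where \<phi> = cell_at
      and h = "\<lambda>\<sigma>. f \<sigma> * f \<sigma> * t ^ cell_deg S E \<sigma>", OF _ embed_term_le[where f = f and q = q]])
  show "(\<lambda>\<sigma>. f \<sigma> * f \<sigma> * t ^ cell_deg S E \<sigma>) summable_on cells S E P q"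
    using f unfolding l2_cochains_iff weighted_l2_def by blast
  show "cell_at p \<in> cells S E P q" if "p \<in> cell_index q" for p
    using that mem_cells_iff by blast
  show "0 \<le> (\<Sum>Ts\<in>chamber_chains P q. chain_coeff Ts * chain_coeff Ts) * (1 + t ^ card S)"
    using t_pos by (intro zero_le_square mult_nonneg_nonneg sum_nonneg) simp_all
qed (use t_pos cell_fibre_bound in auto)
end

lemma cob_lincomb: "cob (\<lambda>\<sigma>. \<alpha> * f \<sigma> + \<beta> * g \<sigma>) \<sigma> = \<alpha> * cob f \<sigma> + \<beta> * cob g \<sigma>"
  unfolding cob_def by (simp add: algebra_simps sum.distrib sum_distrib_left)

lemma bd_t_lincomb:
  "bd_t S E P t q (\<lambda>\<sigma>. \<alpha> * f \<sigma> + \<beta> * g \<sigma>) \<eta> = \<alpha> * bd_t S E P t q f \<eta> + \<beta> * bd_t S E P t q g \<eta>"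
  unfolding bd_t_def by (simp add: case_prod_beta algebra_simps sum.distrib sum_distrib_left)

lemma cob_tendsto:
  "(\<And>\<sigma>. (\<lambda>n. F n \<sigma>) \<longlonglongrightarrow> f \<sigma>) \<Longrightarrow> (\<lambda>n. cob (F n) \<sigma>) \<longlonglongrightarrow> cob f \<sigma>"
  unfolding cob_def by (intro tendsto_sum tendsto_mult tendsto_const)

lemma bd_t_tendsto:
  "(\<And>\<sigma>. (\<lambda>n. F n \<sigma>) \<longlonglongrightarrow> f \<sigma>) \<Longrightarrow> (\<lambda>n. bd_t S E P t q (F n) \<eta>) \<longlonglongrightarrow> bd_t S E P t q f \<eta>"
  unfolding bd_t_def case_prod_beta by (intro tendsto_sum tendsto_mult tendsto_const)

lemma embed_lincomb:
  "embed S E P t q (\<lambda>\<sigma>. \<alpha> * f \<sigma> + \<beta> * g \<sigma>)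
    = (\<lambda>p. \<alpha> * embed S E P t q f p + \<beta> * embed S E P t q g p)"
  unfolding embed_def by (simp add: fun_eq_iff algebra_simps)

lemma embed_zero: "embed S E P t q (\<lambda>\<sigma>. 0) = (\<lambda>p. 0)"
  unfolding embed_def by (simp add: fun_eq_iff)

lemma hecke_ip_cong:
  assumes "\<And>p. p \<in> chamber_chains P q \<times> rac_grp S E \<Longrightarrow> b1 p = b2 p"
  shows "hecke_ip S E P t q a b1 = hecke_ip S E P t q a b2"
  unfolding hecke_ip_def using assms by (intro infsum_cong) auto

context racg_chamber
begin

abbreviation "harmonic_image q \<equiv> embed S E P t q ` harmonic S E P t q"

lemma harmonic_lincomb:
  assumes f: "f \<in> harmonic S E P t q" and g: "g \<in> harmonic S E P t q"
  shows "(\<lambda>\<sigma>. \<alpha> * f \<sigma> + \<beta> * g \<sigma>) \<in> harmonic S E P t q"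
proof -
  have "f \<in> l2_cochains S E P t q" "g \<in> l2_cochains S E P t q"
    using f g unfolding harmonic_def by auto
  then have "(\<lambda>\<sigma>. \<alpha> * f \<sigma> + \<beta> * g \<sigma>) \<in> l2_cochains S E P t q"
    using weighted_l2_lincomb[of "cells S E P q" "\<lambda>\<sigma>. t ^ cell_deg S E \<sigma>" f g \<alpha> \<beta>] t_pos
    unfolding l2_cochains_iff by simp
  with f g show ?thesis
    unfolding harmonic_def by (simp add: cob_lincomb bd_t_lincomb)
qed

lemma zero_harmonic: "(\<lambda>\<sigma>. 0) \<in> harmonic S E P t q"
  unfolding harmonic_def l2_cochains_def by (simp add: cob_def bd_t_def)

lemma harmonic_image_l2:
  assumes "y \<in> harmonic_image q"
  shows "weighted_l2 (cell_index q) hecke_weight y" "p \<notin> cell_index q \<Longrightarrow> y p = 0"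
  using assms embed_weighted_l2 by (auto simp: harmonic_def embed_eq)

definition cell_rep :: "nat \<Rightarrow> 'a cell \<Rightarrow> 'a set list \<times> 'a list set" where
  "cell_rep q \<sigma> = (SOME p. p \<in> cell_index q \<and> cell_at p = \<sigma>)"

lemma cell_rep: "\<sigma> \<in> cells S E P q \<Longrightarrow> cell_rep q \<sigma> \<in> cell_index q \<and> cell_at (cell_rep q \<sigma>) = \<sigma>"
  unfolding cell_rep_def mem_cells_iff by (rule someI_ex) blast

lemma cochain_eq_embed_cell_rep:
  assumes "\<sigma> \<in> cells S E P q"
  shows "f \<sigma> = embed S E P t q f (cell_rep q \<sigma>) / chain_coeff (fst (cell_rep q \<sigma>))"
proof -
  have "0 < chain_coeff (fst (cell_rep q \<sigma>))"
    using cell_rep[OF assms] chain_coeff_pos by (auto simp: mem_Times_iff)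
  then show ?thesis
    using cell_rep[OF assms] by (simp add: embed_eq)
qed

lemma cochain_term_le:
  assumes \<sigma>: "\<sigma> \<in> cells S E P q"
  shows "f \<sigma> * f \<sigma> * t ^ cell_deg S E \<sigma>
    \<le> (\<Sum>Ts\<in>chamber_chains P q. inverse (chain_coeff Ts * chain_coeff Ts))
        * (1 + inverse (t ^ card S))
        * (embed S E P t q f (cell_rep q \<sigma>) * embed S E P t q f (cell_rep q \<sigma>)
          * hecke_weight (cell_rep q \<sigma>))"
proof -
  let ?C = "\<Sum>Ts\<in>chamber_chains P q. inverse (chain_coeff Ts * chain_coeff Ts)"
  let ?p = "cell_rep q \<sigma>" and ?z = "embed S E P t q f"
  have p: "?p \<in> cell_index q" "cell_at ?p = \<sigma>"
    using cell_rep[OF \<sigma>] by auto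
  have "inverse (chain_coeff (fst ?p) * chain_coeff (fst ?p)) \<le> ?C"
    using p(1) finite_chains by (intro member_le_sum) (auto simp: mem_Times_iff)
  moreover have "t ^ cell_deg S E \<sigma> \<le> (1 + inverse (t ^ card S)) * hecke_weight ?p"
    using power_le_one_plus_inverse_power_mult[OF t_pos cell_deg_bounds[OF p(1)]] p(2) by simp
  moreover have "0 \<le> ?C"
    by (intro sum_nonneg) simp
  ultimately have "inverse (chain_coeff (fst ?p) * chain_coeff (fst ?p)) * (?z ?p * ?z ?p)
        * t ^ cell_deg S E \<sigma>
      \<le> ?C * (?z ?p * ?z ?p) * ((1 + inverse (t ^ card S)) * hecke_weight ?p)"
    using t_pos by (intro mult_mono mult_right_mono) simp_all
  then show ?thesis
    using cochain_eq_embed_cell_rep[OF \<sigma>, of f] by (simp add: field_simps)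
qed

lemma l2_cochain_if_embed_l2:
  assumes vanishes: "\<And>\<sigma>. \<sigma> \<notin> cells S E P q \<Longrightarrow> f \<sigma> = 0"
    and l2: "weighted_l2 (cell_index q) hecke_weight (embed S E P t q f)"
  shows "f \<in> l2_cochains S E P t q"
proof -
  let ?z = "embed S E P t q f"
  have "(\<lambda>\<sigma>. f \<sigma> * f \<sigma> * t ^ cell_deg S E \<sigma>) summable_on cells S E P q"
  proof (rule summable_on_bounded_fibres[where \<phi> = "cell_rep q" and K = 1
        and h = "\<lambda>p. ?z p * ?z p * hecke_weight p", OF _ cochain_term_le[where f = f and q = q]])
    show "(\<lambda>p. ?z p * ?z p * hecke_weight p) summable_on cell_index q"
      using l2 unfolding weighted_l2_def .
    show "cell_rep q \<sigma> \<in> cell_index q" if "\<sigma> \<in> cells S E P q" for \<sigma>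
      using cell_rep[OF that] by blast
    show "finite {\<sigma> \<in> cells S E P q. cell_rep q \<sigma> = p}
      \<and> card {\<sigma> \<in> cells S E P q. cell_rep q \<sigma> = p} \<le> 1"
      for p
    proof -
      have sub: "{\<sigma> \<in> cells S E P q. cell_rep q \<sigma> = p} \<subseteq> {cell_at p}"
        using cell_rep by auto
      then show ?thesis
        using finite_subset[OF sub] card_mono[OF _ sub] by simp
    qed
    show "0 \<le> (\<Sum>Ts\<in>chamber_chains P q. inverse (chain_coeff Ts * chain_coeff Ts))
      * (1 + inverse (t ^ card S))"
      using t_pos by (intro mult_nonneg_nonneg sum_nonneg) simp_all
  qed (use t_pos in simp_all)
  then show ?thesis
    unfolding l2_cochains_iff weighted_l2_def using vanishes by blast
qed

lemma harmonic_pointwise_limit: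
  assumes F: "\<And>n. F n \<in> harmonic S E P t q" and lim: "\<And>\<sigma>. (\<lambda>n. F n \<sigma>) \<longlonglongrightarrow> f \<sigma>"
    and f: "f \<in> l2_cochains S E P t q"
  shows "f \<in> harmonic S E P t q"
  unfolding harmonic_def
proof (intro CollectI conjI ballI impI)
  fix \<sigma>
  assume "\<sigma> \<in> cells S E P (Suc q)"
  then have "(\<lambda>n. cob (F n) \<sigma>) = (\<lambda>n. 0)"
    using F unfolding harmonic_def by simp
  moreover have "(\<lambda>n. cob (F n) \<sigma>) \<longlonglongrightarrow> cob f \<sigma>"
    by (rule cob_tendsto[OF lim])
  ultimately show "cob f \<sigma> = 0"
    by (simp add: LIMSEQ_const_iff)
next
  fix \<eta>
  assume "0 < q" "\<eta> \<in> cells S E P (q - 1)"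
  then have "(\<lambda>n. bd_t S E P t q (F n) \<eta>) = (\<lambda>n. 0)"
    using F unfolding harmonic_def by simp
  moreover have "(\<lambda>n. bd_t S E P t q (F n) \<eta>) \<longlonglongrightarrow> bd_t S E P t q f \<eta>"
    by (rule bd_t_tendsto[OF lim])
  ultimately show "bd_t S E P t q f \<eta> = 0"
    by (simp add: LIMSEQ_const_iff)
qed (rule f)

text \<open>On the fibre over a cell the embedding is the cell's value times a fixed positive
  coefficient, so the limit cochain can be read off at the chosen representative of each cell.\<close>

lemma embed_pointwise_limit:
  assumes F_vanishes: "\<And>n \<sigma>. \<sigma> \<notin> cells S E P q \<Longrightarrow> F n \<sigma> = 0"
    and lim: "\<And>p. (\<lambda>n. embed S E P t q (F n) p) \<longlonglongrightarrow> z p"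
    and vanishes: "\<And>p. p \<notin> cell_index q \<Longrightarrow> z p = 0"
  obtains f where "\<And>\<sigma>. (\<lambda>n. F n \<sigma>) \<longlonglongrightarrow> f \<sigma>" "\<And>\<sigma>. \<sigma> \<notin> cells S E P q \<Longrightarrow> f \<sigma> = 0"
    "embed S E P t q f = z"
proof
  define f where "f \<sigma> =
    (if \<sigma> \<in> cells S E P q then z (cell_rep q \<sigma>) / chain_coeff (fst (cell_rep q \<sigma>)) else 0)" for \<sigma>
  show F_lim: "(\<lambda>n. F n \<sigma>) \<longlonglongrightarrow> f \<sigma>" for \<sigma>
  proof (cases "\<sigma> \<in> cells S E P q")
    case True
    then have "F n \<sigma> = embed S E P t q (F n) (cell_rep q \<sigma>) / chain_coeff (fst (cell_rep q \<sigma>))"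
      for n
      by (rule cochain_eq_embed_cell_rep)
    moreover have "(\<lambda>n. embed S E P t q (F n) (cell_rep q \<sigma>) / chain_coeff (fst (cell_rep q \<sigma>)))
        \<longlonglongrightarrow> z (cell_rep q \<sigma>) / chain_coeff (fst (cell_rep q \<sigma>))"
      unfolding divide_inverse by (intro tendsto_mult_right lim)
    ultimately show ?thesis
      using True by (simp add: f_def)
  next
    case False
    then show ?thesis
      by (simp add: f_def F_vanishes)
  qed
  show "f \<sigma> = 0" if "\<sigma> \<notin> cells S E P q" for \<sigma>
    using that by (simp add: f_def)
  show "embed S E P t q f = z"
  proof
    fix p
    show "embed S E P t q f p = z p"
    proof (cases "p \<in> cell_index q")
      case True
      have "(\<lambda>n. chain_coeff (fst p) * F n (cell_at p)) \<longlonglongrightarrow> chain_coeff (fst p) * f (cell_at p)"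
        by (intro tendsto_mult_left F_lim)
      then have "(\<lambda>n. embed S E P t q (F n) p) \<longlonglongrightarrow> chain_coeff (fst p) * f (cell_at p)"
        using True by (simp add: embed_eq)
      then show ?thesis
        using True LIMSEQ_unique[OF _ lim] by (simp add: embed_eq)
    next
      case False
      then show ?thesis
        by (simp add: embed_eq vanishes)
    qed
  qed
qed

lemma harmonic_image_closed:
  assumes Y: "\<And>n. Y n \<in> harmonic_image q" and lim: "\<And>p. (\<lambda>n. Y n p) \<longlonglongrightarrow> z p"
    and l2: "weighted_l2 (cell_index q) hecke_weight z"
    and vanishes: "\<And>p. p \<notin> cell_index q \<Longrightarrow> z p = 0"
  shows "z \<in> harmonic_image q"
proof -
  have "\<forall>n. \<exists>F. F \<in> harmonic S E P t q \<and> Y n = embed S E P t q F"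
    using Y by blast
  from choice[OF this] obtain F
    where F: "\<And>n. F n \<in> harmonic S E P t q" "\<And>n. Y n = embed S E P t q (F n)"
    by blast
  have "F n \<sigma> = 0" if "\<sigma> \<notin> cells S E P q" for n \<sigma>
    using F(1)[of n] that unfolding harmonic_def l2_cochains_def by blast
  moreover have "(\<lambda>n. embed S E P t q (F n) p) \<longlonglongrightarrow> z p" for p
    using lim F(2) by simp
  ultimately obtain f where f: "\<And>\<sigma>. (\<lambda>n. F n \<sigma>) \<longlonglongrightarrow> f \<sigma>" "\<And>\<sigma>. \<sigma> \<notin> cells S E P q \<Longrightarrow> f \<sigma> = 0"
    "embed S E P t q f = z"
    using embed_pointwise_limit vanishes by blast
  then have "f \<in> l2_cochains S E P t q"
    using l2 by (intro l2_cochain_if_embed_l2) simp_all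
  then have "f \<in> harmonic S E P t q"
    by (rule harmonic_pointwise_limit[OF F(1) f(1)])
  with f(3) show ?thesis
    by blast
qed

lemma harmonic_image_closed_subspace:
  "weighted_l2_closed_subspace (cell_index q) hecke_weight (harmonic_image q)"
proof (unfold_locales)
  show "0 < hecke_weight p" for p
    using t_pos by simp
  have "embed S E P t q (\<lambda>\<sigma>. 0) \<in> harmonic_image q"
    using zero_harmonic by (rule imageI)
  then show "(\<lambda>p. 0) \<in> harmonic_image q"
    by (simp add: embed_zero)
  show "(\<lambda>p. \<alpha> * a p + \<beta> * b p) \<in> harmonic_image q"
    if ab: "a \<in> harmonic_image q" "b \<in> harmonic_image q" for a b \<alpha> \<beta>
  proof -
    obtain f g where fg: "f \<in> harmonic S E P t q" "a = embed S E P t q f"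
      "g \<in> harmonic S E P t q" "b = embed S E P t q g"
      using ab by blast
    have "embed S E P t q (\<lambda>\<sigma>. \<alpha> * f \<sigma> + \<beta> * g \<sigma>) \<in> harmonic_image q"
      using harmonic_lincomb[OF fg(1,3)] by (rule imageI)
    then show ?thesis
      using fg(2,4) by (simp add: embed_lincomb)
  qed
  show "weighted_l2 (cell_index q) hecke_weight y" if "y \<in> harmonic_image q" for y
    using that by (rule harmonic_image_l2)
  show "y p = 0" if "y \<in> harmonic_image q" "p \<notin> cell_index q" for y p
    using that by (rule harmonic_image_l2)
  show "z \<in> harmonic_image q"
    if "\<And>n. Y n \<in> harmonic_image q" "\<And>p. (\<lambda>n. Y n p) \<longlonglongrightarrow> z p"
      "weighted_l2 (cell_index q) hecke_weight z" "\<And>p. p \<notin> cell_index q \<Longrightarrow> z p = 0" for Y z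
    using that by (rule harmonic_image_closed)
qed

lemma delta_one_weighted_l2: "weighted_l2 (cell_index q) hecke_weight (delta_one S E Ts0)"
proof -
  let ?g = "\<lambda>p. delta_one S E Ts0 p * delta_one S E Ts0 p * hecke_weight p"
  have support: "?g p = 0" if "p \<noteq> (Ts0, rac_one S E)" for p
    using that unfolding delta_one_def by (cases p) (clarsimp split: if_splits)
  have "?g summable_on (cell_index q \<inter> {(Ts0, rac_one S E)})"
    by (rule summable_on_finite) simp
  moreover have "?g summable_on cell_index q \<longleftrightarrow> ?g summable_on (cell_index q \<inter> {(Ts0, rac_one S E)})"
    by (rule summable_on_cong_neutral) (use support in auto)
  ultimately show ?thesis
    unfolding weighted_l2_def by simp
qed

lemma harmonic_projection_exists:
  assumes "weighted_l2 (cell_index q) hecke_weight x"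
  obtains y where "y \<in> harmonic_image q"
    "\<forall>h\<in>harmonic_image q. hecke_ip S E P t q (\<lambda>p. x p - y p) h = 0"
  using weighted_l2_closed_subspace.projection_exists[OF harmonic_image_closed_subspace assms]
  unfolding hecke_ip_eq_weighted_inner by blast

lemma orth_proj_harmonic_eqI:
  assumes "weighted_l2 (cell_index q) hecke_weight x" "y \<in> harmonic_image q"
    "\<forall>h\<in>harmonic_image q. hecke_ip S E P t q (\<lambda>p. x p - y p) h = 0"
  shows "orth_proj (hecke_ip S E P t q) (harmonic_image q) x = y"
proof -
  have "hecke_ip S E P t q = weighted_inner (cell_index q) hecke_weight"
    by (intro ext) (rule hecke_ip_eq_weighted_inner)
  then show ?thesis
    using weighted_l2_subspace.orth_proj_eqI[OF
        weighted_l2_closed_subspace.axioms(1)[OF harmonic_image_closed_subspace]] assms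
    by simp
qed

end

section \<open>The Davis complex of a special subgroup\<close>

lemma sorted_wrt_del_nth:
  assumes "sorted_wrt R xs"
  shows "sorted_wrt R (del_nth i xs)"
proof -
  have "sorted_wrt R (take i xs)" "\<forall>x\<in>set (take i xs). \<forall>y\<in>set (drop i xs). R x y"
    using assms sorted_wrt_append[of R "take i xs" "drop i xs"] by simp_all
  moreover have "set (drop (Suc i) xs) \<subseteq> set (drop i xs)"
    by (rule set_drop_subset_set_drop) simp
  ultimately show ?thesis
    unfolding del_nth_def sorted_wrt_append using assms sorted_wrt_drop by blast
qed

lemma del_nth_map: "del_nth i (map f xs) = map f (del_nth i xs)"
  unfolding del_nth_def by (simp add: take_map drop_map)

lemma length_del_nth: "i < length xs \<Longrightarrow> length (del_nth i xs) = length xs - 1"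
  unfolding del_nth_def by simp

lemma set_del_nth: "set (del_nth i xs) \<subseteq> set xs"
  unfolding del_nth_def using set_take_subset set_drop_subset by fastforce

lemma chamber_chains_del_nth:
  assumes "Ts \<in> chamber_chains P (Suc q)" "i < length Ts"
  shows "del_nth i Ts \<in> chamber_chains P q"
  using assms sorted_wrt_del_nth set_del_nth[of i Ts] length_del_nth[of i Ts]
  unfolding chamber_chains_def by auto

lemma cells_del_nth:
  assumes "\<sigma> \<in> cells S E P (Suc q)" "i < length \<sigma>"
  shows "del_nth i \<sigma> \<in> cells S E P q"
proof -
  obtain w Ts where "\<sigma> = map (rac_coset S E w) Ts" "w \<in> rac_grp S E" "Ts \<in> chamber_chains P (Suc q)"
    using assms(1) unfolding cells_def by blast
  moreover from this have "del_nth i Ts \<in> chamber_chains P q"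
    using chamber_chains_del_nth assms(2) by simp
  ultimately show ?thesis
    unfolding cells_def by (auto simp: del_nth_map)
qed

locale racg_special_chamber = L: racg_chamber S E P t + K: racg_chamber SK E P t
  for S E P t SK +
  assumes special_subset: "SK \<subseteq> S"
begin

abbreviation "incl \<equiv> special_incl S E"

definition incl_cell :: "'a cell \<Rightarrow> 'a cell" where
  "incl_cell \<sigma> = map (image incl) \<sigma>"

lemma incl_cell_del_nth: "del_nth i (incl_cell \<sigma>) = incl_cell (del_nth i \<sigma>)"
  unfolding incl_cell_def by (rule del_nth_map)

lemma length_incl_cell: "length (incl_cell \<sigma>) = length \<sigma>"
  unfolding incl_cell_def by simp

lemma incl_cell_map_coset:
  assumes "h \<in> rac_grp SK E" "set Ts \<subseteq> P"
  shows "incl_cell (map (rac_coset SK E h) Ts) = map (rac_coset S E (incl h)) Ts"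
  unfolding incl_cell_def
  using rac_coset_special_incl[OF special_subset assms(1) K.chamber_subset] assms(2) by auto

lemma incl_cell_mem_cells:
  assumes "\<sigma> \<in> cells SK E P q"
  shows "incl_cell \<sigma> \<in> cells S E P q"
proof -
  obtain h Ts where "\<sigma> = map (rac_coset SK E h) Ts" "h \<in> rac_grp SK E" "Ts \<in> chamber_chains P q"
    using assms unfolding cells_def by blast
  then show ?thesis
    unfolding cells_def
    using incl_cell_map_coset special_incl_mem[OF special_subset] K.chain_nonempty by fastforce
qed

lemma cell_vertex_subset:
  assumes "\<sigma> \<in> cells SK E P q" "C \<in> set \<sigma>"
  shows "C \<subseteq> rac_grp SK E"
proof -
  obtain h Ts where \<sigma>: "\<sigma> = map (rac_coset SK E h) Ts" "h \<in> rac_grp SK E" "Ts \<in> chamber_chains P q"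
    using assms(1) unfolding cells_def by blast
  then obtain T where "T \<in> set Ts" "C = rac_coset SK E h T"
    using assms(2) by auto
  moreover from this have "T \<in> P"
    using K.chain_nonempty[OF \<sigma>(3)] by blast
  ultimately show ?thesis
    using rac_coset_subset[OF \<sigma>(2) K.chamber_subset] by blast
qed

lemma incl_cell_inj:
  assumes "\<sigma>1 \<in> cells SK E P q1" "\<sigma>2 \<in> cells SK E P q2" "incl_cell \<sigma>1 = incl_cell \<sigma>2"
  shows "\<sigma>1 = \<sigma>2"
proof (rule map_inj_on)
  show "map (image incl) \<sigma>1 = map (image incl) \<sigma>2"
    using assms(3) unfolding incl_cell_def .
  have "set \<sigma>1 \<union> set \<sigma>2 \<subseteq> Pow (rac_grp SK E)"
    using cell_vertex_subset assms(1,2) by blast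
  then show "inj_on (image incl) (set \<sigma>1 \<union> set \<sigma>2)"
    using inj_on_image_Pow[OF inj_on_special_incl[OF special_subset]] inj_on_subset by blast
qed

lemma inj_on_incl_cell: "inj_on incl_cell (cells SK E P q)"
  by (rule inj_onI) (rule incl_cell_inj)

text \<open>The translates \<open>w \<Sigma>\<^sub>K\<close> are disjoint: a cell based at \<open>w\<close> lies in \<open>\<Sigma>\<^sub>K\<close> only if
  \<open>w \<in> W\<^sub>K\<close>.\<close>

lemma mem_special_if_incl_cell:
  assumes w: "w \<in> rac_grp S E" and Ts: "Ts \<noteq> []" "set Ts \<subseteq> P"
    and eq: "map (rac_coset S E w) Ts = incl_cell \<tau>" and \<tau>: "\<tau> \<in> cells SK E P q"
  shows "w \<in> incl ` rac_grp SK E"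
proof -
  have "rac_coset S E w (hd Ts) \<in> set (incl_cell \<tau>)"
    using Ts eq[symmetric] by (cases Ts) auto
  then obtain C where C: "C \<in> set \<tau>" "rac_coset S E w (hd Ts) = incl ` C"
    unfolding incl_cell_def by auto
  then have "w \<in> incl ` C"
    using rac_coset_self[OF w] by metis
  then show ?thesis
    using cell_vertex_subset[OF \<tau> C(1)] by blast
qed

lemma cell_mem_incl_cells_iff:
  assumes w: "w \<in> rac_grp S E" and Ts: "Ts \<in> chamber_chains P q"
  shows "map (rac_coset S E w) Ts \<in> incl_cell ` cells SK E P q \<longleftrightarrow> w \<in> incl ` rac_grp SK E"
proof
  assume "map (rac_coset S E w) Ts \<in> incl_cell ` cells SK E P q"
  then show "w \<in> incl ` rac_grp SK E"
    using mem_special_if_incl_cell[OF w] K.chain_nonempty[OF Ts] by blast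
next
  assume "w \<in> incl ` rac_grp SK E"
  then obtain h where h: "h \<in> rac_grp SK E" "w = incl h"
    by blast
  then have "map (rac_coset S E w) Ts = incl_cell (map (rac_coset SK E h) Ts)"
    using incl_cell_map_coset K.chain_nonempty[OF Ts] by simp
  moreover have "map (rac_coset SK E h) Ts \<in> cells SK E P q"
    unfolding cells_def using h(1) Ts by blast
  ultimately show "map (rac_coset S E w) Ts \<in> incl_cell ` cells SK E P q"
    by blast
qed

lemma coface_mem_incl_cells:
  assumes \<sigma>: "\<sigma> \<in> cells S E P (Suc q)" and i: "i < length \<sigma>"
    and face: "del_nth i \<sigma> \<in> incl_cell ` cells SK E P q"
  shows "\<sigma> \<in> incl_cell ` cells SK E P (Suc q)"
proof -
  obtain w Ts where w: "\<sigma> = map (rac_coset S E w) Ts" "w \<in> rac_grp S E"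
    "Ts \<in> chamber_chains P (Suc q)"
    using \<sigma> unfolding cells_def by blast
  have "del_nth i Ts \<in> chamber_chains P q"
    using chamber_chains_del_nth[OF w(3)] i w(1) by simp
  moreover obtain \<tau> where "\<tau> \<in> cells SK E P q" "map (rac_coset S E w) (del_nth i Ts) = incl_cell \<tau>"
    using face w(1) by (auto simp: del_nth_map)
  ultimately have "w \<in> incl ` rac_grp SK E"
    using mem_special_if_incl_cell[OF w(2)] K.chain_nonempty[of "del_nth i Ts" q] by blast
  then show ?thesis
    using cell_mem_incl_cells_iff[OF w(2,3)] w(1) by simp
qed

lemma common_vertex_incl_cell:
  assumes \<sigma>: "\<sigma> \<in> cells SK E P q" and w: "\<forall>C\<in>set (incl_cell \<sigma>). w \<in> C"
  obtains h where "h \<in> rac_grp SK E" "w = incl h" "\<forall>C\<in>set \<sigma>. h \<in> C"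
proof -
  have "\<sigma> \<noteq> []"
    using \<sigma> K.chain_nonempty unfolding cells_def by auto
  then have "incl ` hd \<sigma> \<in> set (incl_cell \<sigma>)"
    unfolding incl_cell_def by simp
  then obtain h where h: "h \<in> hd \<sigma>" "w = incl h"
    using w by blast
  have h_grp: "h \<in> rac_grp SK E"
    using cell_vertex_subset[OF \<sigma> hd_in_set[OF \<open>\<sigma> \<noteq> []\<close>]] h(1) by blast
  have "h \<in> C" if "C \<in> set \<sigma>" for C
  proof -
    have "incl h \<in> incl ` C"
      using w h(2) that unfolding incl_cell_def by simp
    then obtain h' where "h' \<in> C" "incl h = incl h'"
      by blast
    moreover have "h' \<in> rac_grp SK E"
      using cell_vertex_subset[OF \<sigma> that] \<open>h' \<in> C\<close> by blast
    ultimately show "h \<in> C"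
      using inj_onD[OF inj_on_special_incl[OF special_subset] _ h_grp] by metis
  qed
  with h_grp h(2) show ?thesis
    using that by blast
qed

lemma cell_deg_incl_cell:
  assumes \<sigma>: "\<sigma> \<in> cells SK E P q"
  shows "cell_deg S E (incl_cell \<sigma>) = cell_deg SK E \<sigma>"
proof -
  have "(\<exists>w\<in>rac_grp S E. (\<forall>C\<in>set (incl_cell \<sigma>). w \<in> C) \<and> rac_len S E w = n)
      \<longleftrightarrow> (\<exists>h\<in>rac_grp SK E. (\<forall>C\<in>set \<sigma>. h \<in> C) \<and> rac_len SK E h = n)" for n
  proof
    assume "\<exists>w\<in>rac_grp S E. (\<forall>C\<in>set (incl_cell \<sigma>). w \<in> C) \<and> rac_len S E w = n"
    then obtain w where w: "\<forall>C\<in>set (incl_cell \<sigma>). w \<in> C" "rac_len S E w = n"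
      by blast
    obtain h where "h \<in> rac_grp SK E" "w = incl h" "\<forall>C\<in>set \<sigma>. h \<in> C"
      by (rule common_vertex_incl_cell[OF \<sigma> w(1)])
    then show "\<exists>h\<in>rac_grp SK E. (\<forall>C\<in>set \<sigma>. h \<in> C) \<and> rac_len SK E h = n"
      using w(2) rac_len_special_incl[OF special_subset] by auto
  next
    assume "\<exists>h\<in>rac_grp SK E. (\<forall>C\<in>set \<sigma>. h \<in> C) \<and> rac_len SK E h = n"
    then obtain h where "h \<in> rac_grp SK E" "\<forall>C\<in>set \<sigma>. h \<in> C" "rac_len SK E h = n"
      by blast
    then show "\<exists>w\<in>rac_grp S E. (\<forall>C\<in>set (incl_cell \<sigma>). w \<in> C) \<and> rac_len S E w = n"
      using special_incl_mem[OF special_subset] rac_len_special_incl[OF special_subset]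
      unfolding incl_cell_def by (intro bexI[of _ "incl h"]) auto
  qed
  then show ?thesis
    unfolding cell_deg_def by simp
qed

lemma cob_incl_cell:
  assumes restrict: "\<And>\<tau>. \<tau> \<in> cells SK E P q \<Longrightarrow> g (incl_cell \<tau>) = f \<tau>"
    and \<sigma>: "\<sigma> \<in> cells SK E P (Suc q)"
  shows "cob g (incl_cell \<sigma>) = cob f \<sigma>"
  unfolding cob_def length_incl_cell
  using restrict cells_del_nth[OF \<sigma>] by (intro sum.cong refl) (simp add: incl_cell_del_nth)

lemma cofaces_incl_cell:
  assumes "0 < q" and \<eta>: "\<eta> \<in> cells SK E P (q - 1)"
  shows "{(\<sigma>, i). \<sigma> \<in> cells S E P q \<and> i < length \<sigma> \<and> del_nth i \<sigma> = incl_cell \<eta>}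
      = (\<lambda>(\<sigma>, i). (incl_cell \<sigma>, i)) ` {(\<sigma>, i). \<sigma> \<in> cells SK E P q \<and> i < length \<sigma> \<and> del_nth i \<sigma> = \<eta>}"
    (is "?L = ?m ` ?K")
proof (intro set_eqI iffI)
  fix x
  assume "x \<in> ?L"
  then obtain \<sigma>' i where x: "x = (\<sigma>', i)" "\<sigma>' \<in> cells S E P (Suc (q - 1))" "i < length \<sigma>'"
    "del_nth i \<sigma>' = incl_cell \<eta>"
    using \<open>0 < q\<close> by auto
  moreover have "del_nth i \<sigma>' \<in> incl_cell ` cells SK E P (q - 1)"
    using x(4) \<eta> by blast
  ultimately have "\<sigma>' \<in> incl_cell ` cells SK E P (Suc (q - 1))"
    by (intro coface_mem_incl_cells)
  then obtain \<sigma> where \<sigma>: "\<sigma> \<in> cells SK E P q" "\<sigma>' = incl_cell \<sigma>"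
    using \<open>0 < q\<close> by auto
  then have "del_nth i \<sigma> \<in> cells SK E P (q - 1)"
    using cells_del_nth[of \<sigma> SK E P "q - 1" i] x(3) \<open>0 < q\<close> by (simp add: length_incl_cell)
  then have "del_nth i \<sigma> = \<eta>"
    using incl_cell_inj[OF _ \<eta>] x(4) \<sigma>(2) by (simp add: incl_cell_del_nth)
  then show "x \<in> ?m ` ?K"
    using x \<sigma> by (auto simp: length_incl_cell image_iff)
next
  fix x
  assume "x \<in> ?m ` ?K"
  then show "x \<in> ?L"
    using incl_cell_mem_cells by (auto simp: length_incl_cell incl_cell_del_nth)
qed

lemma bd_t_incl_cell:
  assumes restrict: "\<And>\<tau>. \<tau> \<in> cells SK E P q \<Longrightarrow> g (incl_cell \<tau>) = f \<tau>"
    and "0 < q" and \<eta>: "\<eta> \<in> cells SK E P (q - 1)"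
  shows "bd_t S E P t q g (incl_cell \<eta>) = bd_t SK E P t q f \<eta>"
proof -
  let ?K = "{(\<sigma>, i). \<sigma> \<in> cells SK E P q \<and> i < length \<sigma> \<and> del_nth i \<sigma> = \<eta>}"
  have "inj_on (\<lambda>(\<sigma>, i). (incl_cell \<sigma>, i)) ?K"
    using incl_cell_inj by (auto simp: inj_on_def)
  then show ?thesis
    unfolding bd_t_def cofaces_incl_cell[OF \<open>0 < q\<close> \<eta>]
    using restrict cell_deg_incl_cell \<eta> by (subst sum.reindex) (auto intro!: sum.cong)
qed

definition extend_cochain :: "nat \<Rightarrow> ('a cell \<Rightarrow> real) \<Rightarrow> 'a cell \<Rightarrow> real" where
  "extend_cochain q f \<sigma> =
    (if \<sigma> \<in> incl_cell ` cells SK E P q then f (inv_into (cells SK E P q) incl_cell \<sigma>) else 0)"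

definition restrict_cochain :: "nat \<Rightarrow> ('a cell \<Rightarrow> real) \<Rightarrow> 'a cell \<Rightarrow> real" where
  "restrict_cochain q g \<tau> = (if \<tau> \<in> cells SK E P q then g (incl_cell \<tau>) else 0)"

definition extend_coeffs :: "('a set list \<times> 'a list set \<Rightarrow> real) \<Rightarrow> 'a set list \<times> 'a list set \<Rightarrow> real"
  where
  "extend_coeffs y p =
    (if snd p \<in> incl ` rac_grp SK E then y (fst p, inv_into (rac_grp SK E) incl (snd p)) else 0)"

lemma extend_cochain_incl_cell: "\<tau> \<in> cells SK E P q \<Longrightarrow> extend_cochain q f (incl_cell \<tau>) = f \<tau>"
  unfolding extend_cochain_def using inv_into_f_f[OF inj_on_incl_cell] by simp

lemma extend_cochain_outside: "\<sigma> \<notin> incl_cell ` cells SK E P q \<Longrightarrow> extend_cochain q f \<sigma> = 0"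
  unfolding extend_cochain_def by simp

lemma extend_cochain_l2:
  assumes "f \<in> l2_cochains SK E P t q"
  shows "extend_cochain q f \<in> l2_cochains S E P t q"
proof -
  let ?g = "\<lambda>\<sigma>. extend_cochain q f \<sigma> * extend_cochain q f \<sigma> * t ^ cell_deg S E \<sigma>"
  have "(\<lambda>\<tau>. f \<tau> * f \<tau> * t ^ cell_deg SK E \<tau>) summable_on cells SK E P q"
    using assms unfolding K.l2_cochains_iff weighted_l2_def by blast
  moreover have "(?g \<circ> incl_cell) summable_on cells SK E P q
      \<longleftrightarrow> (\<lambda>\<tau>. f \<tau> * f \<tau> * t ^ cell_deg SK E \<tau>) summable_on cells SK E P q"
    by (rule summable_on_cong) (simp add: extend_cochain_incl_cell cell_deg_incl_cell)
  ultimately have "(?g \<circ> incl_cell) summable_on cells SK E P q"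
    by simp
  then have "?g summable_on incl_cell ` cells SK E P q"
    by (rule summable_on_reindex[OF inj_on_incl_cell, THEN iffD2])
  moreover have "?g summable_on cells S E P q \<longleftrightarrow> ?g summable_on incl_cell ` cells SK E P q"
  proof (rule summable_on_cong_neutral)
    show "?g \<sigma> = 0" if "\<sigma> \<in> cells S E P q - incl_cell ` cells SK E P q" for \<sigma>
      using that extend_cochain_outside[of \<sigma> q f] by simp
  qed (use incl_cell_mem_cells in auto)
  moreover have "extend_cochain q f \<sigma> = 0" if "\<sigma> \<notin> cells S E P q" for \<sigma>
    using that incl_cell_mem_cells extend_cochain_outside[of \<sigma> q f] by blast
  ultimately show ?thesis
    unfolding L.l2_cochains_iff weighted_l2_def by blast
qed

lemma cob_extend_cochain:
  assumes f: "f \<in> harmonic SK E P t q" and \<sigma>: "\<sigma> \<in> cells S E P (Suc q)"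
  shows "cob (extend_cochain q f) \<sigma> = 0"
proof (cases "\<sigma> \<in> incl_cell ` cells SK E P (Suc q)")
  case True
  then obtain \<tau> where \<tau>: "\<tau> \<in> cells SK E P (Suc q)" "\<sigma> = incl_cell \<tau>"
    by blast
  then have "cob (extend_cochain q f) \<sigma> = cob f \<tau>"
    using cob_incl_cell[where g = "extend_cochain q f" and f = f, OF extend_cochain_incl_cell]
    by simp
  also have "\<dots> = 0"
    using f \<tau>(1) unfolding harmonic_def by blast
  finally show ?thesis .
next
  case False
  then have "extend_cochain q f (del_nth i \<sigma>) = 0" if "i < length \<sigma>" for i
    using coface_mem_incl_cells[OF \<sigma> that] extend_cochain_outside by blast
  then show ?thesis
    unfolding cob_def by simp
qed

lemma bd_t_extend_cochain:
  assumes f: "f \<in> harmonic SK E P t q" and "0 < q" and \<eta>: "\<eta> \<in> cells S E P (q - 1)"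
  shows "bd_t S E P t q (extend_cochain q f) \<eta> = 0"
proof (cases "\<eta> \<in> incl_cell ` cells SK E P (q - 1)")
  case True
  then obtain \<eta>' where \<eta>': "\<eta>' \<in> cells SK E P (q - 1)" "\<eta> = incl_cell \<eta>'"
    by blast
  then have "bd_t S E P t q (extend_cochain q f) \<eta> = bd_t SK E P t q f \<eta>'"
    using bd_t_incl_cell[where g = "extend_cochain q f" and f = f, OF extend_cochain_incl_cell \<open>0 < q\<close>]
    by simp
  also have "\<dots> = 0"
    using f \<open>0 < q\<close> \<eta>'(1) unfolding harmonic_def by blast
  finally show ?thesis .
next
  case False
  have "extend_cochain q f \<sigma> = 0" if "\<sigma> \<in> cells S E P q" "i < length \<sigma>" "del_nth i \<sigma> = \<eta>" for \<sigma> i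
  proof (rule extend_cochain_outside)
    show "\<sigma> \<notin> incl_cell ` cells SK E P q"
    proof
      assume "\<sigma> \<in> incl_cell ` cells SK E P q"
      then obtain \<tau> where \<tau>: "\<tau> \<in> cells SK E P (Suc (q - 1))" "\<sigma> = incl_cell \<tau>"
        using \<open>0 < q\<close> by auto
      then have "del_nth i \<tau> \<in> cells SK E P (q - 1)"
        using cells_del_nth that(2) by (simp add: length_incl_cell)
      moreover have "incl_cell (del_nth i \<tau>) = \<eta>"
        using that(3) \<tau>(2) by (simp add: incl_cell_del_nth)
      ultimately show False
        using False by blast
    qed
  qed
  then show ?thesis
    unfolding bd_t_def by (intro sum.neutral) auto
qed

lemma extend_cochain_harmonic:
  assumes "f \<in> harmonic SK E P t q"
  shows "extend_cochain q f \<in> harmonic S E P t q"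
  using assms extend_cochain_l2 cob_extend_cochain bd_t_extend_cochain
  unfolding harmonic_def by blast

lemma restrict_cochain_harmonic:
  assumes g: "g \<in> harmonic S E P t q"
  shows "restrict_cochain q g \<in> harmonic SK E P t q"
proof -
  have restrict: "g (incl_cell \<tau>) = restrict_cochain q g \<tau>" if "\<tau> \<in> cells SK E P q" for \<tau>
    using that by (simp add: restrict_cochain_def)
  let ?h = "\<lambda>\<sigma>. g \<sigma> * g \<sigma> * t ^ cell_deg S E \<sigma>"
  have "?h summable_on cells S E P q"
    using g unfolding harmonic_def L.l2_cochains_iff weighted_l2_def by blast
  then have "?h summable_on incl_cell ` cells SK E P q"
    by (rule summable_on_subset) (use incl_cell_mem_cells in blast)
  then have "(?h \<circ> incl_cell) summable_on cells SK E P q"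
    by (rule summable_on_reindex[OF inj_on_incl_cell, THEN iffD1])
  moreover have "(?h \<circ> incl_cell) summable_on cells SK E P q \<longleftrightarrow>
      (\<lambda>\<tau>. restrict_cochain q g \<tau> * restrict_cochain q g \<tau> * t ^ cell_deg SK E \<tau>)
        summable_on cells SK E P q"
    by (rule summable_on_cong) (simp add: restrict cell_deg_incl_cell)
  moreover have "restrict_cochain q g \<tau> = 0" if "\<tau> \<notin> cells SK E P q" for \<tau>
    using that by (simp add: restrict_cochain_def)
  ultimately have "restrict_cochain q g \<in> l2_cochains SK E P t q"
    unfolding K.l2_cochains_iff weighted_l2_def by blast
  moreover have "cob (restrict_cochain q g) \<tau> = 0" if "\<tau> \<in> cells SK E P (Suc q)" for \<tau>
    using cob_incl_cell[where g = g and f = "restrict_cochain q g", OF restrict that] g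
      incl_cell_mem_cells[OF that]
    unfolding harmonic_def by simp
  moreover have "bd_t SK E P t q (restrict_cochain q g) \<eta> = 0"
    if "0 < q" "\<eta> \<in> cells SK E P (q - 1)" for \<eta>
    using bd_t_incl_cell[where g = g and f = "restrict_cochain q g", OF restrict that] g
      incl_cell_mem_cells[OF that(2)] that(1)
    unfolding harmonic_def by simp
  ultimately show ?thesis
    unfolding harmonic_def by blast
qed

lemma chain_coeff_eq: "Ts \<in> chamber_chains P q \<Longrightarrow> L.chain_coeff Ts = K.chain_coeff Ts"
  unfolding L.chain_coeff_def K.chain_coeff_def
  using poincare_special_incl[OF special_subset K.chamber_subset[OF K.hd_chain_mem]] by simp

lemma inv_into_incl: "h \<in> rac_grp SK E \<Longrightarrow> inv_into (rac_grp SK E) incl (incl h) = h"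
  by (rule inv_into_f_f[OF inj_on_special_incl[OF special_subset]])

lemma embed_extend_cochain:
  assumes "f \<in> l2_cochains SK E P t q"
  shows "embed S E P t q (extend_cochain q f) = extend_coeffs (embed SK E P t q f)"
proof
  fix p :: "'a set list \<times> 'a list set"
  obtain Ts w where p: "p = (Ts, w)"
    by (cases p)
  show "embed S E P t q (extend_cochain q f) p = extend_coeffs (embed SK E P t q f) p"
  proof (cases "Ts \<in> chamber_chains P q \<and> w \<in> rac_grp S E")
    case True
    show ?thesis
    proof (cases "w \<in> incl ` rac_grp SK E")
      case True
      then obtain h where h: "h \<in> rac_grp SK E" "w = incl h"
        by blast
      have Ts: "Ts \<in> chamber_chains P q"
        using \<open>Ts \<in> chamber_chains P q \<and> w \<in> rac_grp S E\<close> by blast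
      have "map (rac_coset SK E h) Ts \<in> cells SK E P q"
        unfolding cells_def using h(1) Ts by blast
      moreover have "map (rac_coset S E w) Ts = incl_cell (map (rac_coset SK E h) Ts)"
        using incl_cell_map_coset[OF h(1)] K.chain_nonempty[OF Ts] h(2) by simp
      ultimately have
        "extend_cochain q f (map (rac_coset S E w) Ts) = f (map (rac_coset SK E h) Ts)"
        by (simp add: extend_cochain_incl_cell)
      then show ?thesis
        using Ts h p special_incl_mem[OF special_subset h(1)]
        by (simp add: L.embed_eq K.embed_eq extend_coeffs_def inv_into_incl chain_coeff_eq)
    next
      case False
      then show ?thesis
        using True p cell_mem_incl_cells_iff extend_cochain_outside
        by (simp add: L.embed_eq extend_coeffs_def)
    qed
  next
    case False
    then show ?thesis
      using p special_incl_mem[OF special_subset] inv_into_incl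
      by (auto simp: L.embed_eq K.embed_eq extend_coeffs_def)
  qed
qed

lemma embed_restrict_cochain:
  assumes h: "h \<in> rac_grp SK E"
  shows "embed SK E P t q (restrict_cochain q g) (Ts, h) = embed S E P t q g (Ts, incl h)"
proof (cases "Ts \<in> chamber_chains P q")
  case True
  then have "map (rac_coset SK E h) Ts \<in> cells SK E P q"
    unfolding cells_def using h by blast
  then show ?thesis
    using True h incl_cell_map_coset[OF h] K.chain_nonempty[OF True]
      special_incl_mem[OF special_subset h]
    by (simp add: L.embed_eq K.embed_eq restrict_cochain_def chain_coeff_eq)
qed (simp add: L.embed_eq K.embed_eq)

lemma hecke_ip_extend_coeffs:
  "hecke_ip S E P t q (extend_coeffs a) b = hecke_ip SK E P t q a (\<lambda>p. b (fst p, incl (snd p)))"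
proof -
  let ?m = "\<lambda>p::'a set list \<times> 'a list set. (fst p, incl (snd p))"
  let ?g = "\<lambda>p. extend_coeffs a p * b p * t ^ rac_len S E (snd p)"
  have inj: "inj_on ?m (chamber_chains P q \<times> rac_grp SK E)"
    using inj_on_special_incl[OF special_subset] by (auto simp: inj_on_def)
  have image: "?m ` (chamber_chains P q \<times> rac_grp SK E) = chamber_chains P q \<times> incl ` rac_grp SK E"
    by force
  have "hecke_ip S E P t q (extend_coeffs a) b = infsum ?g (chamber_chains P q \<times> rac_grp S E)"
    unfolding L.hecke_ip_eq_weighted_inner weighted_inner_def ..
  also have "\<dots> = infsum ?g (chamber_chains P q \<times> incl ` rac_grp SK E)"
    using special_incl_mem[OF special_subset]
    by (intro infsum_cong_neutral) (auto simp: extend_coeffs_def)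
  also have "\<dots> = infsum (?g \<circ> ?m) (chamber_chains P q \<times> rac_grp SK E)"
    unfolding image[symmetric] by (rule infsum_reindex[OF inj])
  also have "\<dots> = infsum (\<lambda>p. a p * b (?m p) * t ^ rac_len SK E (snd p))
      (chamber_chains P q \<times> rac_grp SK E)"
    using inv_into_incl rac_len_special_incl[OF special_subset]
    by (intro infsum_cong) (auto simp: extend_coeffs_def)
  also have "\<dots> = hecke_ip SK E P t q a (\<lambda>p. b (fst p, incl (snd p)))"
    unfolding K.hecke_ip_eq_weighted_inner weighted_inner_def ..
  finally show ?thesis .
qed

lemma delta_one_extend_coeffs: "delta_one S E Ts0 = extend_coeffs (delta_one SK E Ts0)"
proof
  fix p :: "'a set list \<times> 'a list set"
  have one: "rac_one SK E \<in> rac_grp SK E" "incl (rac_one SK E) = rac_one S E"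
    unfolding rac_one_def
    using special_incl_one[OF special_subset] by (auto simp: rac_one_def intro: rac_cls_in_grp)
  show "delta_one S E Ts0 p = extend_coeffs (delta_one SK E Ts0) p"
  proof (cases "snd p \<in> incl ` rac_grp SK E")
    case True
    then obtain h where "h \<in> rac_grp SK E" "snd p = incl h"
      by blast
    moreover have "incl h = rac_one S E \<longleftrightarrow> h = rac_one SK E" if "h \<in> rac_grp SK E"
      using inj_onD[OF inj_on_special_incl[OF special_subset] _ that one(1)] one(2) by auto
    ultimately show ?thesis
      unfolding extend_coeffs_def delta_one_def by (cases p) (simp add: inv_into_incl)
  next
    case False
    then have "snd p \<noteq> rac_one S E"
      using one by force
    with False show ?thesis
      unfolding extend_coeffs_def delta_one_def by (cases p) simp
  qed
qed

text \<open>Harmonic cochains of \<open>\<Sigma>\<^sub>K\<close> extend by zero, and harmonic cochains of \<open>W\<^sub>L \<Sigma>\<^sub>K\<close>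
  restrict to \<open>\<Sigma>\<^sub>K\<close>; so the projection of \<open>\<delta>\<^sub>1\<close> computed in \<open>\<Sigma>\<^sub>K\<close>, extended by zero,
  already has a residual orthogonal to all harmonic cochains of \<open>W\<^sub>L \<Sigma>\<^sub>K\<close>.\<close>

lemma orth_proj_delta_one:
  "orth_proj (hecke_ip S E P t q) (L.harmonic_image q) (delta_one S E Ts0)
    = extend_coeffs (orth_proj (hecke_ip SK E P t q) (K.harmonic_image q) (delta_one SK E Ts0))"
proof -
  obtain y where y: "y \<in> K.harmonic_image q"
    "\<forall>h\<in>K.harmonic_image q. hecke_ip SK E P t q (\<lambda>p. delta_one SK E Ts0 p - y p) h = 0"
    using K.harmonic_projection_exists[OF K.delta_one_weighted_l2] by blast
  then obtain f where f: "f \<in> harmonic SK E P t q" "y = embed SK E P t q f"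
    by blast
  have "extend_coeffs y = embed S E P t q (extend_cochain q f)"
    using f embed_extend_cochain unfolding harmonic_def by simp
  then have in_image: "extend_coeffs y \<in> L.harmonic_image q"
    using extend_cochain_harmonic[OF f(1)] by simp
  have residual: "(\<lambda>p. delta_one S E Ts0 p - extend_coeffs y p)
      = extend_coeffs (\<lambda>p. delta_one SK E Ts0 p - y p)"
    unfolding delta_one_extend_coeffs by (simp add: extend_coeffs_def fun_eq_iff)
  have "hecke_ip S E P t q (\<lambda>p. delta_one S E Ts0 p - extend_coeffs y p) (embed S E P t q g) = 0"
    if "g \<in> harmonic S E P t q" for g
  proof -
    have "hecke_ip S E P t q (\<lambda>p. delta_one S E Ts0 p - extend_coeffs y p) (embed S E P t q g)
        = hecke_ip SK E P t q (\<lambda>p. delta_one SK E Ts0 p - y p)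
            (embed SK E P t q (restrict_cochain q g))"
      unfolding residual hecke_ip_extend_coeffs
      by (rule hecke_ip_cong) (auto simp: embed_restrict_cochain)
    also have "\<dots> = 0"
      using y(2) restrict_cochain_harmonic[OF that] by blast
    finally show ?thesis .
  qed
  then have
    "orth_proj (hecke_ip S E P t q) (L.harmonic_image q) (delta_one S E Ts0) = extend_coeffs y"
    using L.orth_proj_harmonic_eqI[OF L.delta_one_weighted_l2 in_image] by blast
  moreover have "orth_proj (hecke_ip SK E P t q) (K.harmonic_image q) (delta_one SK E Ts0) = y"
    using K.orth_proj_harmonic_eqI[OF K.delta_one_weighted_l2 y] .
  ultimately show ?thesis
    by simp
qed

lemma l2_betti_eq: "l2_betti S E P t q = l2_betti SK E P t q"
  unfolding l2_betti_def Let_def orth_proj_delta_one hecke_ip_extend_coeffs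
  by (intro sum.cong refl hecke_ip_cong)
    (auto simp: delta_one_extend_coeffs extend_coeffs_def inv_into_incl)

end

theorem proposition8p4:
  fixes S :: "'a set" and E :: "'a \<Rightarrow> 'a \<Rightarrow> bool" and K :: "'a set set"
    and t :: real and q :: nat
  assumes "finite S"
    and "\<And>s u. E s u \<Longrightarrow> s \<in> S \<and> u \<in> S"
    and "\<And>s u. E s u \<Longrightarrow> E u s"
    and "\<And>s. \<not> E s s"
    and "full_subcomplex K (nerve S E)"
    and "t > 0"
  shows "l2_betti S E (insert {} K) t q = l2_betti (\<Union>K) E (insert {} K) t q"
proof -
  have simplices: "T \<subseteq> S" "s \<in> T \<Longrightarrow> u \<in> T \<Longrightarrow> s \<noteq> u \<Longrightarrow> E s u" if "T \<in> K" for T s u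
    using assms(5) that unfolding full_subcomplex_def subcomplex_def nerve_def by blast+
  then have "\<Union>K \<subseteq> S"
    by blast
  interpret racg_special_chamber S E "insert {} K" t "\<Union>K"
  proof unfold_locales
    show "finite (\<Union>K)"
      using \<open>\<Union>K \<subseteq> S\<close> assms(1) by (rule finite_subset)
  qed (use assms(1,6) simplices \<open>\<Union>K \<subseteq> S\<close> in auto)
  show ?thesis
    by (rule l2_betti_eq)
qed

end
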